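(* Let $g\ge1$ be an integer. (1) There are exactly $8$ distinct geometric Apollonian super-packings (not identified under Euclidean motions) that are strongly integral and have divisor $g$. (2) The set of all ordered, oriented Descartes configurations $\mathcal D$ with $M_{\mathcal D}$ integral and with $\gcd$ of curvatures equal to $g$ is the union of exactly $384$ orbits of the super-Apollonian group $\mathcal A^S$.
   Context: Circles are taken in $\hat{\mathbb C}=\mathbb R^2\cup\{\infty\}$; lines count as circles. A Descartes configuration is a set of four mutually tangent circles with disjoint interiors; an ordered, oriented one carries an ordering of its circles and a total orientation (there are 48 such choices for each unordered configuration), with signed curvatures (reciprocal radius, negative when the interior is unbounded, $0$ for lines, all reversed for negative orientation). Its curvature-center coordinate matrix $M_{\mathcal D}$ is the $4\times3$ matrix with $i$-th row $(b_i,b_ix_i,b_iy_i)$, $b_i$ the signed curvature and $(x_i,y_i)$ the center of the $i$-th circle (for a line: $(0,n_x,n_y)$ with $n$ the unit normal pointing into the line's interior half-plane). Let $S_i$ be the $4\times4$ integer matrix equal to the identity except that row $i$ has $-1$ in position $i$ and $2$ elsewhere, $S_i^\perp=S_i^T$, and $\mathcal A^S=\langle S_1,\dots,S_4,S_1^\perp,\dots,S_4^\perp\rangle$ the super-Apollonian group, acting on ordered oriented Descartes configurations by left multiplication on their augmented curvature-center coordinate matrices (so $M_{U[\mathcal D]}=UM_{\mathcal D}$). The geometric super-packing generated by $\mathcal D$ is the set of circles of configurations in $\mathcal A^S[\mathcal D]$. It is strongly integral if $M_{\mathcal D}$ is integral for one (equivalently all) configurations in the orbit, and its divisor is the gcd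 of the curvatures of any configuration in it. *)

theory Defs
  imports "HOL-Analysis.Analysis"
begin

text \<open>Points of the extended plane: None is the point at infinity.\<close>
type_synonym ext_point = "complex option"

text \<open>OCirc c r True: circle with centre c, radius r, interior the open
  bounded disc; OCirc c r False: same circle, interior the complement of the closed disc
  (containing infinity).  OLine n d: the line of points z with z.n = d (n a unit normal),
  interior the open half-plane z.n > d, i.e. n points into the interior.\<close>
datatype ocircle = OCirc complex real bool | OLine complex real

fun wf_oc :: "ocircle \<Rightarrow> bool" where
  "wf_oc (OCirc c r b) = (r > 0)"
| "wf_oc (OLine n d) = (norm n = 1)"

fun oc_boundary :: "ocircle \<Rightarrow> ext_point set" where
  "oc_boundary (OCirc c r b) = Some ` sphere c r"
| "oc_boundary (OLine n d) = insert None (Some ` {z. Re (z * cnj n) = d})"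

fun oc_interior :: "ocircle \<Rightarrow> ext_point set" where
  "oc_interior (OCirc c r True) = Some ` ball c r"
| "oc_interior (OCirc c r False) = insert None (Some ` (- cball c r))"
| "oc_interior (OLine n d) = Some ` {z. Re (z * cnj n) > d}"

fun oc_reverse :: "ocircle \<Rightarrow> ocircle" where
  "oc_reverse (OCirc c r b) = OCirc c r (\<not> b)"
| "oc_reverse (OLine n d) = OLine (- n) (- d)"

fun oc_curv :: "ocircle \<Rightarrow> real" where
  "oc_curv (OCirc c r b) = (if b then 1 / r else - (1 / r))"
| "oc_curv (OLine n d) = 0"

fun cc_row :: "ocircle \<Rightarrow> real^3" where
  "cc_row (OCirc c r b) = (let k = oc_curv (OCirc c r b) in vector [k, k * Re c, k * Im c])"
| "cc_row (OLine n d) = vector [0, Re n, Im n]"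

text \<open>Augmented curvature-center coordinates (bbar, b, b x, b y), bbar the signed curvature
  of the image under inversion in the unit circle: bbar = b |c|^2 - 1/b for circles,
  bbar = 2 d for the line z.n = d.\<close>
fun aug_row :: "ocircle \<Rightarrow> real^4" where
  "aug_row (OCirc c r b) = (let k = oc_curv (OCirc c r b) in
      vector [k * (norm c)\<^sup>2 - 1 / k, k, k * Re c, k * Im c])"
| "aug_row (OLine n d) = vector [2 * d, 0, Re n, Im n]"

type_synonym config = "4 \<Rightarrow> ocircle"

definition tangent :: "ocircle \<Rightarrow> ocircle \<Rightarrow> bool" where
  "tangent A B \<longleftrightarrow> (\<exists>!p. p \<in> oc_boundary A \<and> p \<in> oc_boundary B)"

definition pos_descartes :: "config \<Rightarrow> bool" where
  "pos_descartes D \<longleftrightarrow> (\<forall>i. wf_oc (D i)) \<and>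
     (\<forall>i j. i \<noteq> j \<longrightarrow> tangent (D i) (D j) \<and> oc_interior (D i) \<inter> oc_interior (D j) = {})"

definition oo_descartes :: "config \<Rightarrow> bool" where
  "oo_descartes D \<longleftrightarrow> pos_descartes D \<or> pos_descartes (oc_reverse \<circ> D)"

definition M_mat :: "config \<Rightarrow> real^3^4" where
  "M_mat D = (\<chi> i. cc_row (D i))"

definition W_mat :: "config \<Rightarrow> real^4^4" where
  "W_mat D = (\<chi> i. aug_row (D i))"

definition strongly_integral :: "config \<Rightarrow> bool" where
  "strongly_integral D \<longleftrightarrow> (\<forall>i j. M_mat D $ i $ j \<in> \<int>)"

definition divisor :: "config \<Rightarrow> int" where
  "divisor D = Gcd ((\<lambda>i. \<lfloor>oc_curv (D i)\<rfloor>) ` UNIV)"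

definition S_mat :: "4 \<Rightarrow> real^4^4" where
  "S_mat i = (\<chi> r c. if r = i then (if c = i then -1 else 2) else (if r = c then 1 else 0))"

inductive_set superA :: "(real^4^4) set" where
  gen: "S_mat i \<in> superA"
| gen_perp: "transpose (S_mat i) \<in> superA"
| one: "mat 1 \<in> superA"
| mult: "U \<in> superA \<Longrightarrow> V \<in> superA \<Longrightarrow> U ** V \<in> superA"
| inv: "U \<in> superA \<Longrightarrow> matrix_inv U \<in> superA"

definition superA_orbit :: "config \<Rightarrow> config set" where
  "superA_orbit D = {D'. oo_descartes D' \<and> (\<exists>U\<in>superA. W_mat D' = U ** W_mat D)}"

definition super_packing :: "config \<Rightarrow> ext_point set set" where
  "super_packing D = {oc_boundary (D' i) | D' i. D' \<in> superA_orbit D}"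

end

theory Submission
  imports Defs
begin

lemma vector4_nth [simp]:
  "(vector [a, b, c, d] :: 'a::zero^4) $ 1 = a" "(vector [a, b, c, d] :: 'a^4) $ 2 = b"
  "(vector [a, b, c, d] :: 'a^4) $ 3 = c" "(vector [a, b, c, d] :: 'a^4) $ 4 = d"
  unfolding vector_def by simp_all

lemma num4_neq [simp]:
  "(1::4) \<noteq> 2" "(1::4) \<noteq> 3" "(1::4) \<noteq> 4" "(2::4) \<noteq> 3" "(2::4) \<noteq> 4" "(3::4) \<noteq> 4"
  "(2::4) \<noteq> 1" "(3::4) \<noteq> 1" "(4::4) \<noteq> 1" "(3::4) \<noteq> 2" "(4::4) \<noteq> 2" "(4::4) \<noteq> 3"
  by simp_all

lemma matrix_matrix_mult_nth4:
  "((A::real^4^4) ** B) $ i $ j = A$i$1 * B$1$j + A$i$2 * B$2$j + A$i$3 * B$3$j + A$i$4 * B$4$j"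
  by (simp add: matrix_matrix_mult_def sum_4)

lemma matrix_vector_mult_nth4:
  "((A::real^4^4) *v x) $ i = A$i$1 * x$1 + A$i$2 * x$2 + A$i$3 * x$3 + A$i$4 * x$4"
  by (simp add: matrix_vector_mult_def sum_4)

lemma S_mat_nth:
  "S_mat i $ r $ c = (if r = i then (if c = i then -1 else 2) else (if r = c then 1 else 0))"
  by (simp add: S_mat_def)

lemma matrix_inv_eqI:
  fixes A B :: "'a::semiring_1^'n^'n"
  assumes "A ** B = mat 1" "B ** A = mat 1"
  shows "matrix_inv A = B"
proof -
  have "A ** matrix_inv A = mat 1 \<and> matrix_inv A ** A = mat 1"
    unfolding matrix_inv_def using someI_ex[of "\<lambda>A'. A ** A' = mat 1 \<and> A' ** A = mat 1"] assms
    by blast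
  then have "matrix_inv A = matrix_inv A ** (A ** B)"
    using assms by simp
  also have "\<dots> = B"
    using \<open>A ** matrix_inv A = mat 1 \<and> matrix_inv A ** A = mat 1\<close> by (simp add: matrix_mul_assoc)
  finally show ?thesis .
qed

definition superA_gens :: "(real^4^4) set" where
  "superA_gens = range S_mat \<union> range (\<lambda>i. transpose (S_mat i))"

inductive_set superA_words :: "(real^4^4) set" where
  Nil: "mat 1 \<in> superA_words"
| Cons: "\<Gamma> \<in> superA_gens \<Longrightarrow> U \<in> superA_words \<Longrightarrow> \<Gamma> ** U \<in> superA_words"

lemma superA_gens_cases:
  assumes "\<Gamma> \<in> superA_gens"
  obtains "\<Gamma> = S_mat 1" | "\<Gamma> = S_mat 2" | "\<Gamma> = S_mat 3" | "\<Gamma> = S_mat 4"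
    | "\<Gamma> = transpose (S_mat 1)" | "\<Gamma> = transpose (S_mat 2)" | "\<Gamma> = transpose (S_mat 3)"
    | "\<Gamma> = transpose (S_mat 4)"
proof -
  from assms obtain i where "\<Gamma> = S_mat i \<or> \<Gamma> = transpose (S_mat i)"
    unfolding superA_gens_def by blast
  with exhaust_4[of i] show ?thesis using that by blast
qed

lemma superA_gen_involution: "\<Gamma> \<in> superA_gens \<Longrightarrow> \<Gamma> ** \<Gamma> = mat 1"
  by (erule superA_gens_cases)
    (simp_all add: vec_eq_iff forall_4 matrix_matrix_mult_nth4 S_mat_nth transpose_def mat_def)

lemma superA_words_mult: "U \<in> superA_words \<Longrightarrow> V \<in> superA_words \<Longrightarrow> U ** V \<in> superA_words"
  by (induction rule: superA_words.induct)
    (auto simp: matrix_mul_assoc[symmetric] intro: superA_words.intros)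

lemma superA_words_invertible:
  "U \<in> superA_words \<Longrightarrow> \<exists>V\<in>superA_words. U ** V = mat 1 \<and> V ** U = mat 1"
proof (induction rule: superA_words.induct)
  case Nil
  then show ?case using superA_words.Nil by auto
next
  case (Cons \<Gamma> U)
  then obtain V where V: "V \<in> superA_words" "U ** V = mat 1" "V ** U = mat 1" by blast
  have "V ** \<Gamma> \<in> superA_words"
    using superA_words_mult[OF V(1) superA_words.Cons[OF Cons(1) superA_words.Nil]] by simp
  moreover have "(\<Gamma> ** U) ** (V ** \<Gamma>) = mat 1" "(V ** \<Gamma>) ** (\<Gamma> ** U) = mat 1"
    using V superA_gen_involution[OF Cons(1)] by (metis matrix_mul_assoc matrix_mul_lid)+
  ultimately show ?case by blast
qed

lemma superA_eq_words: "superA = superA_words"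
proof (intro set_eqI iffI)
  show "U \<in> superA_words" if "U \<in> superA" for U
    using that
  proof (induction rule: superA.induct)
    case (inv U)
    then obtain V where "V \<in> superA_words" "U ** V = mat 1" "V ** U = mat 1"
      using superA_words_invertible by blast
    then show ?case using matrix_inv_eqI[of U V] by simp
  qed (use superA_words_mult superA_words.Cons[OF _ superA_words.Nil] superA_words.Nil
      in \<open>auto simp: superA_gens_def\<close>)
  show "U \<in> superA" if "U \<in> superA_words" for U
    using that by induction (auto simp: superA_gens_def intro: superA.intros)
qed

lemma superA_induct [consumes 1, case_names one gen]:
  assumes "U \<in> superA" "P (mat 1)"
    and "\<And>\<Gamma> U. \<Gamma> \<in> superA_gens \<Longrightarrow> U \<in> superA \<Longrightarrow> P U \<Longrightarrow> P (\<Gamma> ** U)"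
  shows "P U"
  using assms(1) unfolding superA_eq_words
  by induction (use assms(2,3) superA_eq_words in auto)

lemma superA_gen: "\<Gamma> \<in> superA_gens \<Longrightarrow> \<Gamma> \<in> superA"
  by (auto simp: superA_gens_def intro: superA.intros)

lemma superA_invertible: "U \<in> superA \<Longrightarrow> \<exists>V\<in>superA. V ** U = mat 1"
  using superA_words_invertible unfolding superA_eq_words by blast

definition cong_mod2 :: "real \<Rightarrow> real \<Rightarrow> bool" where
  "cong_mod2 x y \<longleftrightarrow> (x - y) / 2 \<in> \<int>"

lemma cong_mod2_refl [simp]: "cong_mod2 x x"
  by (simp add: cong_mod2_def)

lemma cong_mod2_sym: "cong_mod2 x y \<Longrightarrow> cong_mod2 y x"
  unfolding cong_mod2_def using Ints_minus[of "(x - y) / 2"] by (simp add: minus_divide_left)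

lemma cong_mod2_trans: "cong_mod2 x y \<Longrightarrow> cong_mod2 y z \<Longrightarrow> cong_mod2 x z"
proof -
  have "(x - z) / 2 = (x - y) / 2 + (y - z) / 2" by (simp add: field_simps)
  then show "cong_mod2 x y \<Longrightarrow> cong_mod2 y z \<Longrightarrow> cong_mod2 x z"
    unfolding cong_mod2_def by (metis Ints_add)
qed

lemma cong_mod2_minus_even: "t \<in> \<int> \<Longrightarrow> cong_mod2 (x - 2 * t) x"
  unfolding cong_mod2_def by simp

lemma cong_mod2_uminus: "x \<in> \<int> \<Longrightarrow> cong_mod2 (- x) x"
  using cong_mod2_minus_even[of x x] by simp

lemma half_notin_Ints: "(1 / 2 :: real) \<notin> \<int>"
proof
  assume "(1 / 2 :: real) \<in> \<int>"
  then obtain k where "(1 / 2 :: real) = of_int k" by (metis Ints_cases)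
  then have "(1::real) = of_int (2 * k)" by simp
  then have "1 = 2 * k" by (metis of_int_eq_1_iff)
  then show False by presburger
qed

lemma cong_mod2_of_bool_iff: "cong_mod2 (of_bool a) (of_bool b) \<longleftrightarrow> a = b"
proof
  assume "cong_mod2 (of_bool a) (of_bool b)"
  moreover have "(- 1 / 2 :: real) \<notin> \<int>"
    using half_notin_Ints Ints_minus[of "- 1 / 2 :: real"] by auto
  ultimately show "a = b"
    using half_notin_Ints by (cases a; cases b) (auto simp: cong_mod2_def)
qed simp

definition integral_id_mod2 :: "real^'n^'n \<Rightarrow> bool" where
  "integral_id_mod2 U \<longleftrightarrow> (\<forall>i j. U$i$j \<in> \<int> \<and> cong_mod2 (U$i$j) (mat 1 $ i $ j))"

lemma integral_id_mod2_mv_Ints: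
  "integral_id_mod2 U \<Longrightarrow> \<forall>k. x$k \<in> \<int> \<Longrightarrow> (U *v x)$i \<in> \<int>"
  unfolding integral_id_mod2_def matrix_vector_mult_def by (auto intro!: Ints_sum Ints_mult)

lemma integral_id_mod2_mv_cong:
  assumes U: "integral_id_mod2 U" and x: "\<forall>k. x$k \<in> \<int>"
  shows "cong_mod2 ((U *v x)$i) (x$i)"
proof -
  have "x$i = (mat 1 *v x)$i" by simp
  then have "((U *v x)$i - x$i) / 2 = (\<Sum>k\<in>UNIV. (U$i$k - mat 1 $ i $ k) / 2 * x$k)"
    by (simp add: matrix_vector_mult_def sum_subtractf[symmetric] sum_divide_distrib
        left_diff_distrib)
  also have "\<dots> \<in> \<int>"
    using U x unfolding integral_id_mod2_def cong_mod2_def by (intro Ints_sum Ints_mult) auto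
  finally show ?thesis unfolding cong_mod2_def .
qed

lemma matrix_mult_nth_as_mv: "(U ** V) $ i $ j = (U *v (\<chi> k. V$k$j)) $ i"
  by (simp add: matrix_matrix_mult_def matrix_vector_mult_def)

lemma integral_id_mod2_mult:
  assumes U: "integral_id_mod2 U" and V: "integral_id_mod2 V"
  shows "integral_id_mod2 (U ** V)"
  unfolding integral_id_mod2_def
proof (intro allI conjI)
  fix i j
  have col: "\<forall>k. (\<chi> k. V$k$j)$k \<in> \<int>" using V unfolding integral_id_mod2_def by simp
  show "(U ** V)$i$j \<in> \<int>"
    unfolding matrix_mult_nth_as_mv using integral_id_mod2_mv_Ints[OF U col] .
  have "cong_mod2 ((U ** V)$i$j) (V$i$j)"
    unfolding matrix_mult_nth_as_mv using integral_id_mod2_mv_cong[OF U col] by simp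
  then show "cong_mod2 ((U ** V)$i$j) (mat 1 $ i $ j)"
    using V cong_mod2_trans unfolding integral_id_mod2_def by blast
qed

lemma superA_integral_id_mod2: "U \<in> superA \<Longrightarrow> integral_id_mod2 U"
proof (induction rule: superA_induct)
  case one
  then show ?case by (simp add: integral_id_mod2_def mat_def)
next
  case (gen \<Gamma> U)
  have "integral_id_mod2 \<Gamma>"
    using gen(1) unfolding integral_id_mod2_def
    by (elim superA_gens_cases) (simp_all add: S_mat_nth transpose_def mat_def cong_mod2_def)
  then show ?case using gen(3) integral_id_mod2_mult by blast
qed

text \<open>Twice the Descartes quadratic form \<open>Q\<^sub>D = I - 1/2 \<one> \<one>\<^sup>T\<close>.\<close>
definition descartes_form :: "real^4^4" where
  "descartes_form = (\<chi> i j. if i = j then 1 else -1)"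

lemma superA_preserves_form:
  "U \<in> superA \<Longrightarrow> transpose U ** descartes_form ** U = descartes_form"
proof (induction rule: superA_induct)
  case (gen \<Gamma> U)
  have "transpose \<Gamma> ** descartes_form ** \<Gamma> = descartes_form"
    using gen(1) by (elim superA_gens_cases)
      (simp_all add: vec_eq_iff forall_4 matrix_matrix_mult_nth4 S_mat_nth transpose_def
        descartes_form_def)
  moreover have "transpose (\<Gamma> ** U) ** descartes_form ** (\<Gamma> ** U)
      = transpose U ** (transpose \<Gamma> ** descartes_form ** \<Gamma>) ** U"
    by (simp add: matrix_transpose_mul matrix_mul_assoc)
  ultimately show ?case
    using gen(3) by (simp add: matrix_mul_assoc)
qed (simp add: transpose_mat)

lemma superA_preserves_form_dual:
  "U \<in> superA \<Longrightarrow> U ** descartes_form ** transpose U = descartes_form"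
proof (induction rule: superA_induct)
  case (gen \<Gamma> U)
  have "\<Gamma> ** descartes_form ** transpose \<Gamma> = descartes_form"
    using gen(1) by (elim superA_gens_cases)
      (simp_all add: vec_eq_iff forall_4 matrix_matrix_mult_nth4 S_mat_nth transpose_def
        descartes_form_def)
  then have "(\<Gamma> ** U) ** descartes_form ** transpose (\<Gamma> ** U)
      = \<Gamma> ** (U ** descartes_form ** transpose U) ** transpose \<Gamma>"
    by (simp add: matrix_transpose_mul matrix_mul_assoc)
  then show ?case
    using gen(3) \<open>\<Gamma> ** descartes_form ** transpose \<Gamma> = descartes_form\<close>
    by (simp add: matrix_mul_assoc)
qed simp

definition entry_sum :: "real^4 \<Rightarrow> real" where
  "entry_sum x = x$1 + x$2 + x$3 + x$4"

definition descartes_vec :: "real^4 \<Rightarrow> bool" where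
  "descartes_vec x \<longleftrightarrow> (entry_sum x)\<^sup>2 = 2 * ((x$1)\<^sup>2 + (x$2)\<^sup>2 + (x$3)\<^sup>2 + (x$4)\<^sup>2)"

lemma descartes_vec_iff_form: "descartes_vec x \<longleftrightarrow> x \<bullet> (descartes_form *v x) = 0"
  unfolding descartes_vec_def entry_sum_def inner_vec_def sum_4 matrix_vector_mult_nth4
    descartes_form_def
  by (simp add: power2_eq_square algebra_simps) (rule eq_commute)

lemma inner_matrix_vector_transpose:
  "(A *v x) \<bullet> y = x \<bullet> (transpose A *v (y :: real^'n))"
  by (metis dot_lmul_matrix transpose_matrix_vector transpose_transpose)

lemma superA_descartes_vec:
  assumes "U \<in> superA" "descartes_vec x"
  shows "descartes_vec (U *v x)"
proof -
  have "(U *v x) \<bullet> (descartes_form *v (U *v x))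
      = x \<bullet> ((transpose U ** descartes_form ** U) *v x)"
    by (simp add: inner_matrix_vector_transpose matrix_vector_mul_assoc matrix_mul_assoc)
  then show ?thesis
    using assms superA_preserves_form descartes_vec_iff_form by simp
qed

lemma descartes_quadruple_bounds:
  fixes a b c d s :: real
  assumes n: "s\<^sup>2 = 2 * (a\<^sup>2 + b\<^sup>2 + c\<^sup>2 + d\<^sup>2)" and s: "s = a + b + c + d" and pos: "s > 0"
  shows "- s < 4 * a \<and> 4 * a < 3 * s"
proof -
  have "3 * (b\<^sup>2 + c\<^sup>2 + d\<^sup>2) - (b + c + d)\<^sup>2 = (b - c)\<^sup>2 + (c - d)\<^sup>2 + (b - d)\<^sup>2"
    by (simp add: power2_eq_square algebra_simps)
  then have "(b + c + d)\<^sup>2 \<le> 3 * (b\<^sup>2 + c\<^sup>2 + d\<^sup>2)"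
    using zero_le_power2[of "b - c"] zero_le_power2[of "c - d"] zero_le_power2[of "b - d"]
    by linarith
  moreover have "b + c + d = s - a" "b\<^sup>2 + c\<^sup>2 + d\<^sup>2 = s\<^sup>2 / 2 - a\<^sup>2"
    using n s by (simp_all add: field_simps)
  ultimately have "(s - a)\<^sup>2 \<le> 3 * (s\<^sup>2 / 2 - a\<^sup>2)" by simp
  then have key: "8 * a\<^sup>2 - 4 * s * a - s\<^sup>2 \<le> 0"
    by (simp add: power2_eq_square algebra_simps)
  have sq: "s\<^sup>2 > 0" using pos by simp
  have "- s < 4 * a"
  proof (rule ccontr)
    assume "\<not> - s < 4 * a"
    then have h: "s / 4 \<le> - a" by simp
    have "(s / 4)\<^sup>2 \<le> (- a)\<^sup>2" using h pos by (intro power_mono) auto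
    then have "a\<^sup>2 \<ge> s\<^sup>2 / 16" by (simp add: power_divide)
    moreover have "s * (s / 4) \<le> s * (- a)" using h pos by (intro mult_left_mono) auto
    then have "- 4 * s * a \<ge> s\<^sup>2" by (simp add: power2_eq_square)
    ultimately show False using key sq by linarith
  qed
  moreover have "4 * a < 3 * s"
  proof (rule ccontr)
    assume h: "\<not> 4 * a < 3 * s"
    have "(3 * s) * (s / 2) \<le> (4 * a) * (2 * a - s)"
      by (rule mult_mono) (use h pos in linarith)+
    then have "8 * a\<^sup>2 - 4 * s * a \<ge> 3 * s\<^sup>2 / 2"
      by (simp add: power2_eq_square algebra_simps)
    with key sq show False by linarith
  qed
  ultimately show ?thesis ..
qed

lemma descartes_vec_bounds:
  assumes "descartes_vec x" "entry_sum x > 0"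
  shows "- entry_sum x < 4 * x$i \<and> 4 * x$i < 3 * entry_sum x"
proof -
  have n: "(entry_sum x)\<^sup>2 = 2 * ((x$1)\<^sup>2 + (x$2)\<^sup>2 + (x$3)\<^sup>2 + (x$4)\<^sup>2)"
    using assms(1) unfolding descartes_vec_def .
  consider "i = 1" | "i = 2" | "i = 3" | "i = 4" using exhaust_4 by blast
  then show ?thesis
  proof cases
    case 1
    then show ?thesis using descartes_quadruple_bounds[OF n] assms(2)
      unfolding entry_sum_def by simp
  next
    case 2
    then show ?thesis using descartes_quadruple_bounds[of "entry_sum x" "x$2" "x$1" "x$3" "x$4"]
      n assms(2) unfolding entry_sum_def by (simp add: ac_simps)
  next
    case 3
    then show ?thesis using descartes_quadruple_bounds[of "entry_sum x" "x$3" "x$1" "x$2" "x$4"]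
      n assms(2) unfolding entry_sum_def by (simp add: ac_simps)
  next
    case 4
    then show ?thesis using descartes_quadruple_bounds[of "entry_sum x" "x$4" "x$1" "x$2" "x$3"]
      n assms(2) unfolding entry_sum_def by (simp add: ac_simps)
  qed
qed

lemma entry_sum_S_mat: "entry_sum (S_mat i *v x) = 3 * entry_sum x - 4 * x$i"
  using exhaust_4[of i]
  by (elim disjE) (simp_all add: entry_sum_def matrix_vector_mult_nth4 S_mat_nth)

lemma entry_sum_S_mat_transpose: "entry_sum (transpose (S_mat i) *v x) = entry_sum x + 4 * x$i"
  using exhaust_4[of i]
  by (elim disjE) (simp_all add: entry_sum_def matrix_vector_mult_nth4 S_mat_nth transpose_def)

lemma superA_entry_sum_pos:
  assumes "U \<in> superA" "descartes_vec x" "entry_sum x > 0"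
  shows "entry_sum (U *v x) > 0"
  using assms
proof (induction arbitrary: x rule: superA_induct)
  case (gen \<Gamma> U)
  have "descartes_vec (U *v x)" "entry_sum (U *v x) > 0"
    using gen superA_descartes_vec by auto
  moreover obtain i where "\<Gamma> = S_mat i \<or> \<Gamma> = transpose (S_mat i)"
    using gen(1) unfolding superA_gens_def by blast
  ultimately have "entry_sum (\<Gamma> *v (U *v x)) > 0"
    using descartes_vec_bounds[of "U *v x" i]
    by (auto simp: entry_sum_S_mat entry_sum_S_mat_transpose simp del: transpose_matrix_vector)
  then show ?case by (simp add: matrix_vector_mul_assoc)
qed simp

definition row_permute :: "('n \<Rightarrow> 'n) \<Rightarrow> 'a^'m^'n \<Rightarrow> 'a^'m^'n" where
  "row_permute \<sigma> X = (\<chi> i. X $ \<sigma> i)"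

definition perm_conj :: "('n \<Rightarrow> 'n) \<Rightarrow> 'a^'n^'n \<Rightarrow> 'a^'n^'n" where
  "perm_conj \<sigma> U = (\<chi> i j. U $ \<sigma> i $ \<sigma> j)"

lemma row_permute_nth [simp]: "row_permute \<sigma> X $ i = X $ \<sigma> i"
  by (simp add: row_permute_def)

lemma perm_conj_nth [simp]: "perm_conj \<sigma> U $ i $ j = U $ \<sigma> i $ \<sigma> j"
  by (simp add: perm_conj_def)

lemma row_permute_comp: "row_permute \<sigma> (row_permute \<tau> X) = row_permute (\<tau> \<circ> \<sigma>) X"
  by (simp add: vec_eq_iff)

lemma row_permute_id [simp]: "row_permute id X = X"
  by (simp add: vec_eq_iff)

lemma row_permute_inv: "bij \<tau> \<Longrightarrow> row_permute (inv \<tau>) (row_permute \<tau> X) = X"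
  by (simp add: vec_eq_iff bij_is_surj surj_f_inv_f)

lemma row_permute_uminus: "row_permute \<sigma> (- X) = - row_permute \<sigma> (X :: 'a::group_add^'m^'n)"
  by (simp add: vec_eq_iff)

lemma row_permute_mult:
  fixes U :: "'a::semiring_1^'n^'n"
  assumes "bij \<sigma>"
  shows "row_permute \<sigma> (U ** X) = perm_conj \<sigma> U ** row_permute \<sigma> X"
proof -
  have "(\<Sum>k\<in>UNIV. U $ \<sigma> i $ k * X $ k $ j) = (\<Sum>k\<in>UNIV. U $ \<sigma> i $ \<sigma> k * X $ \<sigma> k $ j)" for i j
    using sum.reindex_bij_betw[of \<sigma> UNIV UNIV "\<lambda>k. U $ \<sigma> i $ k * X $ k $ j"] assms by simp
  then show ?thesis by (simp add: vec_eq_iff matrix_matrix_mult_def)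
qed

lemma perm_conj_mult:
  fixes U :: "'a::semiring_1^'n^'n"
  assumes "bij \<sigma>"
  shows "perm_conj \<sigma> (U ** V) = perm_conj \<sigma> U ** perm_conj \<sigma> V"
proof -
  have "(\<Sum>k\<in>UNIV. U $ \<sigma> i $ k * V $ k $ \<sigma> j) = (\<Sum>k\<in>UNIV. U $ \<sigma> i $ \<sigma> k * V $ \<sigma> k $ \<sigma> j)" for i j
    using sum.reindex_bij_betw[of \<sigma> UNIV UNIV "\<lambda>k. U $ \<sigma> i $ k * V $ k $ \<sigma> j"] assms by simp
  then show ?thesis by (simp add: vec_eq_iff matrix_matrix_mult_def)
qed

lemma perm_conj_S_mat: "bij \<sigma> \<Longrightarrow> perm_conj \<sigma> (S_mat i) = S_mat (inv \<sigma> i)"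
  by (simp add: vec_eq_iff S_mat_nth bij_inv_eq_iff[symmetric] bij_is_inj inj_eq)

lemma perm_conj_transpose: "perm_conj \<sigma> (transpose U) = transpose (perm_conj \<sigma> U)"
  by (simp add: vec_eq_iff transpose_def)

lemma perm_conj_superA: "U \<in> superA \<Longrightarrow> bij \<sigma> \<Longrightarrow> perm_conj \<sigma> U \<in> superA"
proof (induction rule: superA_induct)
  case one
  have "perm_conj \<sigma> (mat 1) = (mat 1 :: real^4^4)"
    using one by (simp add: vec_eq_iff mat_def bij_is_inj inj_eq)
  then show ?case using superA.one by simp
next
  case (gen \<Gamma> U)
  have "perm_conj \<sigma> \<Gamma> \<in> superA_gens"
    using gen(1,4) unfolding superA_gens_def
    by (auto simp: perm_conj_S_mat perm_conj_transpose)
  then show ?case using gen perm_conj_mult superA.mult superA_gen by metis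
qed

lemma matrix_mult_uminus_right: "U ** (- X) = - (U ** X :: 'a::ring_1^'m^'n)"
  by (simp add: vec_eq_iff matrix_matrix_mult_def sum_negf)

lemma matrix_mult_uminus_left: "(- U) ** X = - (U ** X :: 'a::ring_1^'m^'n)"
  by (simp add: vec_eq_iff matrix_matrix_mult_def sum_negf)

definition superA_equiv :: "real^4^4 \<Rightarrow> real^4^4 \<Rightarrow> bool" where
  "superA_equiv X Y \<longleftrightarrow> (\<exists>U\<in>superA. U ** X = Y)"

lemma superA_equiv_refl: "superA_equiv X X"
  unfolding superA_equiv_def using superA.one by force

lemma superA_equiv_trans [trans]: "superA_equiv X Y \<Longrightarrow> superA_equiv Y Z \<Longrightarrow> superA_equiv X Z"
  unfolding superA_equiv_def by (metis superA.mult matrix_mul_assoc)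

lemma superA_equiv_sym: "superA_equiv X Y \<Longrightarrow> superA_equiv Y X"
  unfolding superA_equiv_def by (metis superA_invertible matrix_mul_assoc matrix_mul_lid)

lemma superA_equiv_row_permute:
  "bij \<sigma> \<Longrightarrow> superA_equiv X Y \<Longrightarrow> superA_equiv (row_permute \<sigma> X) (row_permute \<sigma> Y)"
  unfolding superA_equiv_def by (metis perm_conj_superA row_permute_mult)

lemma superA_equiv_uminus: "superA_equiv X Y \<Longrightarrow> superA_equiv (- X) (- Y)"
  unfolding superA_equiv_def by (metis matrix_mult_uminus_right)

lemma superA_equiv_gen: "\<Gamma> \<in> superA_gens \<Longrightarrow> superA_equiv X (\<Gamma> ** X)"
  unfolding superA_equiv_def using superA_gen by blast

text \<open>\<open>aug_form = 2 Q\<^sub>W\<^sup>-\<^sup>1\<close> for the form \<open>Q\<^sub>W\<close> of the augmented Euclidean Descartes theorem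
  \<open>W\<^sup>T Q\<^sub>D W = Q\<^sub>W\<close>. As \<open>Q\<^sub>D\<close> is an involution, that theorem is equivalent to \<open>descartes_rel W\<close>.\<close>
definition aug_form :: "real^4^4" where
  "aug_form = (\<chi> i j. if (i = 1 \<and> j = 2) \<or> (i = 2 \<and> j = 1) then - 1 / 2
      else if i = j \<and> (i = 3 \<or> i = 4) then 1 else 0)"

definition aug_inner :: "real^4 \<Rightarrow> real^4 \<Rightarrow> real" where
  "aug_inner x y = - (x$1 * y$2 + x$2 * y$1) / 2 + x$3 * y$3 + x$4 * y$4"

definition descartes_rel :: "real^4^4 \<Rightarrow> bool" where
  "descartes_rel W \<longleftrightarrow> W ** aug_form ** transpose W = descartes_form"

lemma aug_inner_commute: "aug_inner x y = aug_inner y x"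
  unfolding aug_inner_def by (simp add: algebra_simps)

lemma descartes_rel_iff:
  "descartes_rel W \<longleftrightarrow> (\<forall>i j. aug_inner (W$i) (W$j) = (if i = j then 1 else -1))"
proof -
  have "(W ** aug_form ** transpose W) $ i $ j = aug_inner (W$i) (W$j)" for i j
    by (simp add: matrix_matrix_mult_nth4 aug_form_def transpose_def aug_inner_def field_simps)
  then show ?thesis
    unfolding descartes_rel_def vec_eq_iff by (simp add: descartes_form_def)
qed

lemma superA_descartes_rel:
  assumes "U \<in> superA" "descartes_rel W"
  shows "descartes_rel (U ** W)"
proof -
  have "(U ** W) ** aug_form ** transpose (U ** W) = U ** (W ** aug_form ** transpose W) ** transpose U"
    by (simp add: matrix_transpose_mul matrix_mul_assoc)
  then show ?thesis
    using assms superA_preserves_form_dual unfolding descartes_rel_def by simp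
qed

lemma descartes_rel_row_permute: "bij \<sigma> \<Longrightarrow> descartes_rel W \<Longrightarrow> descartes_rel (row_permute \<sigma> W)"
  unfolding descartes_rel_iff by (simp add: bij_is_inj inj_eq)

lemma descartes_rel_uminus: "descartes_rel W \<Longrightarrow> descartes_rel (- W)"
  unfolding descartes_rel_iff by (simp add: aug_inner_def)

definition descartes_form_inv :: "real^4^4" where
  "descartes_form_inv = (\<chi> i j. if i = j then 1 / 4 else - 1 / 4)"

definition aug_form_inv :: "real^4^4" where
  "aug_form_inv = (\<chi> i j. if (i = 1 \<and> j = 2) \<or> (i = 2 \<and> j = 1) then -2
      else if i = j \<and> (i = 3 \<or> i = 4) then 1 else 0)"

lemma descartes_rel_right_inverse:
  "descartes_rel W \<Longrightarrow> W ** (aug_form ** transpose W ** descartes_form_inv) = mat 1"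
proof -
  have "descartes_form ** descartes_form_inv = mat 1"
    by (simp add: vec_eq_iff forall_4 matrix_matrix_mult_nth4 descartes_form_def
        descartes_form_inv_def mat_def)
  then show "descartes_rel W \<Longrightarrow> ?thesis"
    unfolding descartes_rel_def by (simp add: matrix_mul_assoc)
qed

lemma descartes_rel_dual:
  assumes "descartes_rel W"
  shows "transpose W ** descartes_form_inv ** W = aug_form_inv"
proof -
  have "(aug_form ** transpose W ** descartes_form_inv) ** W = mat 1"
    using descartes_rel_right_inverse[OF assms] matrix_left_right_inverse by blast
  then have "aug_form_inv ** aug_form ** (transpose W ** descartes_form_inv ** W) = aug_form_inv"
    by (metis matrix_mul_assoc matrix_mul_rid)
  moreover have "aug_form_inv ** aug_form = mat 1"
    by (simp add: vec_eq_iff forall_4 matrix_matrix_mult_nth4 aug_form_def aug_form_inv_def mat_def)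
  ultimately show ?thesis by simp
qed

definition curvatures :: "real^4^4 \<Rightarrow> real^4" where
  "curvatures W = (\<chi> i. W$i$2)"

lemma curvatures_nth [simp]: "curvatures W $ i = W$i$2"
  by (simp add: curvatures_def)

lemma curvatures_mult: "curvatures (U ** W) = U *v curvatures W"
  by (simp add: vec_eq_iff matrix_matrix_mult_def matrix_vector_mult_def)

lemma descartes_rel_curvatures:
  assumes "descartes_rel W"
  shows "descartes_vec (curvatures W)"
proof -
  have "(transpose W ** descartes_form_inv ** W) $ 2 $ 2 = 0"
    using descartes_rel_dual[OF assms] by (simp add: aug_form_inv_def)
  then show ?thesis
    unfolding descartes_vec_def entry_sum_def
    by (simp add: matrix_matrix_mult_nth4 transpose_def descartes_form_inv_def power2_eq_square
        algebra_simps)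
qed

lemma descartes_quadruple_reduced:
  fixes a b c d s :: real
  assumes n: "s\<^sup>2 = 2 * (a\<^sup>2 + b\<^sup>2 + c\<^sup>2 + d\<^sup>2)" and s: "s = a + b + c + d"
    and nonneg: "a \<ge> 0" "b \<ge> 0" "c \<ge> 0" "d \<ge> 0"
    and le: "2 * a \<le> s" "2 * b \<le> s" "2 * c \<le> s" "2 * d \<le> s"
  shows "(a = 0 \<or> 2 * a = s) \<and> (b = 0 \<or> 2 * b = s) \<and> (c = 0 \<or> 2 * c = s) \<and> (d = 0 \<or> 2 * d = s)"
proof -
  have "(s - 2 * a) * (2 * a) + (s - 2 * b) * (2 * b) + (s - 2 * c) * (2 * c) + (s - 2 * d) * (2 * d) = 0"
    using n s by (simp add: power2_eq_square algebra_simps)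
  moreover have "(s - 2 * a) * (2 * a) \<ge> 0" "(s - 2 * b) * (2 * b) \<ge> 0"
    "(s - 2 * c) * (2 * c) \<ge> 0" "(s - 2 * d) * (2 * d) \<ge> 0"
    using nonneg le by simp_all
  ultimately have "(s - 2 * a) * (2 * a) = 0" "(s - 2 * b) * (2 * b) = 0"
    "(s - 2 * c) * (2 * c) = 0" "(s - 2 * d) * (2 * d) = 0"
    by linarith+
  then have "2 * a = s \<or> a = 0" "2 * b = s \<or> b = 0" "2 * c = s \<or> c = 0" "2 * d = s \<or> d = 0"
    by (simp_all add: eq_commute[of s])
  then show ?thesis by blast
qed

lemma descartes_vec_reduced:
  assumes "descartes_vec b" "\<forall>i. 0 \<le> b$i \<and> 2 * b$i \<le> entry_sum b"
  shows "b$i = 0 \<or> 2 * b$i = entry_sum b"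
proof -
  have "(b$1 = 0 \<or> 2 * b$1 = entry_sum b) \<and> (b$2 = 0 \<or> 2 * b$2 = entry_sum b)
      \<and> (b$3 = 0 \<or> 2 * b$3 = entry_sum b) \<and> (b$4 = 0 \<or> 2 * b$4 = entry_sum b)"
    using assms by (intro descartes_quadruple_reduced) (auto simp: descartes_vec_def entry_sum_def)
  then show ?thesis using exhaust_4[of i] by auto
qed

text \<open>One step of the reduction algorithm: a negative curvature, or one exceeding half the sum,
  is replaced via \<open>S\<^sub>i\<^sup>T\<close> resp. \<open>S\<^sub>i\<close> so that the curvature sum drops but stays positive.\<close>
lemma exists_gen_decreasing_entry_sum:
  assumes b: "descartes_vec b" "entry_sum b > 0"
    and not_reduced: "\<not> (\<forall>i. 0 \<le> b$i \<and> 2 * b$i \<le> entry_sum b)"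
  shows "\<exists>\<Gamma>\<in>superA_gens. 0 < entry_sum (\<Gamma> *v b) \<and> entry_sum (\<Gamma> *v b) < entry_sum b"
proof -
  obtain i where "b$i < 0 \<or> 2 * b$i > entry_sum b" using not_reduced by (meson not_le)
  then show ?thesis
  proof
    assume "b$i < 0"
    then show ?thesis
      using descartes_vec_bounds[OF b, of i] entry_sum_S_mat_transpose[of i b]
      by (intro bexI[of _ "transpose (S_mat i)"]) (auto simp: superA_gens_def simp del: transpose_matrix_vector)
  next
    assume "2 * b$i > entry_sum b"
    then show ?thesis
      using descartes_vec_bounds[OF b, of i] entry_sum_S_mat[of i b]
      by (intro bexI[of _ "S_mat i"]) (auto simp: superA_gens_def)
  qed
qed

lemma superA_reduce:
  assumes "descartes_vec b" "\<forall>i. b$i \<in> \<int>" "entry_sum b > 0"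
  shows "\<exists>U\<in>superA. entry_sum (U *v b) > 0 \<and> (\<forall>i. (U *v b)$i = 0 \<or> 2 * (U *v b)$i = entry_sum (U *v b))"
  using assms
proof (induction b rule: measure_induct_rule[where f = "\<lambda>b. nat \<lfloor>entry_sum b\<rfloor>"])
  case (less b)
  show ?case
  proof (cases "\<forall>i. 0 \<le> b$i \<and> 2 * b$i \<le> entry_sum b")
    case True
    then show ?thesis
      using less.prems descartes_vec_reduced superA.one by (intro bexI[of _ "mat 1"]) auto
  next
    case False
    then obtain \<Gamma> where \<Gamma>: "\<Gamma> \<in> superA_gens" "0 < entry_sum (\<Gamma> *v b)" "entry_sum (\<Gamma> *v b) < entry_sum b"
      using exists_gen_decreasing_entry_sum less.prems by blast
    have ints: "\<forall>i. (\<Gamma> *v b)$i \<in> \<int>"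
      using integral_id_mod2_mv_Ints superA_integral_id_mod2 superA_gen \<Gamma>(1) less.prems(2) by blast
    then have "entry_sum (\<Gamma> *v b) \<in> \<int>" "entry_sum b \<in> \<int>"
      using less.prems(2) by (simp_all add: entry_sum_def)
    then have "nat \<lfloor>entry_sum (\<Gamma> *v b)\<rfloor> < nat \<lfloor>entry_sum b\<rfloor>"
      using \<Gamma>(2,3) by (auto elim!: Ints_cases)
    moreover have "descartes_vec (\<Gamma> *v b)"
      using superA_descartes_vec superA_gen \<Gamma>(1) less.prems(1) by blast
    ultimately obtain U where "U \<in> superA" "entry_sum (U *v (\<Gamma> *v b)) > 0"
      "\<forall>i. (U *v (\<Gamma> *v b))$i = 0 \<or> 2 * (U *v (\<Gamma> *v b))$i = entry_sum (U *v (\<Gamma> *v b))"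
      using less.IH ints \<Gamma>(2) by blast
    moreover have "U ** \<Gamma> \<in> superA"
      using superA.mult[OF \<open>U \<in> superA\<close> superA_gen[OF \<Gamma>(1)]] .
    ultimately show ?thesis
      by (intro bexI[of _ "U ** \<Gamma>"]) (simp_all add: matrix_vector_mul_assoc)
  qed
qed

definition hstrip_mat :: "real \<Rightarrow> real \<Rightarrow> real \<Rightarrow> real^4^4" where
  "hstrip_mat g p q = vector [vector [2 * (q + 1) / g, 0, 0, 1], vector [2 * (1 - q) / g, 0, 0, -1],
     vector [(p\<^sup>2 + q\<^sup>2 - 1) / g, g, p, q], vector [((p - 2)\<^sup>2 + q\<^sup>2 - 1) / g, g, p - 2, q]]"

definition vstrip_mat :: "real \<Rightarrow> real \<Rightarrow> real \<Rightarrow> real^4^4" where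
  "vstrip_mat g p q = vector [vector [2 * (p + 1) / g, 0, 1, 0], vector [2 * (1 - p) / g, 0, -1, 0],
     vector [(p\<^sup>2 + q\<^sup>2 - 1) / g, g, p, q], vector [(p\<^sup>2 + (q - 2)\<^sup>2 - 1) / g, g, p, q - 2]]"

lemma S_mat_4_hstrip_mat:
  "g \<noteq> 0 \<Longrightarrow> S_mat 4 ** hstrip_mat g p q
    = row_permute (Transposition.transpose 3 4) (hstrip_mat g (p + 2) q)"
  by (simp add: vec_eq_iff forall_4 matrix_matrix_mult_nth4 S_mat_nth hstrip_mat_def field_simps
      power2_eq_square)

lemma S_mat_1_transpose_hstrip_mat:
  "g \<noteq> 0 \<Longrightarrow> transpose (S_mat 1) ** hstrip_mat g p q
    = row_permute (Transposition.transpose 1 2) (hstrip_mat g p (q + 2))"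
  by (simp add: vec_eq_iff forall_4 matrix_matrix_mult_nth4 S_mat_nth transpose_def hstrip_mat_def
      field_simps power2_eq_square)

lemma S_mat_4_vstrip_mat:
  "g \<noteq> 0 \<Longrightarrow> S_mat 4 ** vstrip_mat g p q
    = row_permute (Transposition.transpose 3 4) (vstrip_mat g p (q + 2))"
  by (simp add: vec_eq_iff forall_4 matrix_matrix_mult_nth4 S_mat_nth vstrip_mat_def field_simps
      power2_eq_square)

lemma S_mat_1_transpose_vstrip_mat:
  "g \<noteq> 0 \<Longrightarrow> transpose (S_mat 1) ** vstrip_mat g p q
    = row_permute (Transposition.transpose 1 2) (vstrip_mat g (p + 2) q)"
  by (simp add: vec_eq_iff forall_4 matrix_matrix_mult_nth4 S_mat_nth transpose_def vstrip_mat_def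
      field_simps power2_eq_square)

lemma superA_equiv_swap_back:
  assumes "superA_equiv X (row_permute (Transposition.transpose a b) Y)"
  shows "superA_equiv Y (row_permute (Transposition.transpose a b) X)"
proof -
  have "superA_equiv (row_permute (Transposition.transpose a b) X) Y"
    using superA_equiv_row_permute[OF bij_transpose[of a b] assms]
    by (simp add: row_permute_comp)
  then show ?thesis by (rule superA_equiv_sym)
qed

lemma superA_equiv_shift_mod2:
  fixes G :: "int \<Rightarrow> real^4^4"
  assumes shift: "\<And>p. superA_equiv (G p) (row_permute (Transposition.transpose a b) (G (p + 2)))"
  shows "\<exists>\<kappa>. bij \<kappa> \<and> superA_equiv (G p) (row_permute \<kappa> (G (p mod 2)))"
proof -
  define r where "r = p mod 2"
  have "\<exists>\<kappa>. bij \<kappa> \<and> superA_equiv (G (r + 2 * k)) (row_permute \<kappa> (G r))" for k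
  proof (induction k rule: int_induct[where k = 0])
    case base
    then show ?case using superA_equiv_refl by (metis bij_id row_permute_id add_0_right mult_zero_right)
  next
    case (step1 i)
    then obtain \<kappa> where \<kappa>: "bij \<kappa>" "superA_equiv (G (r + 2 * i)) (row_permute \<kappa> (G r))" by blast
    have "superA_equiv (G (r + 2 * (i + 1))) (row_permute (Transposition.transpose a b) (G (r + 2 * i)))"
      using superA_equiv_swap_back[OF shift[of "r + 2 * i"]] by (simp add: algebra_simps)
    also have "superA_equiv \<dots> (row_permute (Transposition.transpose a b) (row_permute \<kappa> (G r)))"
      by (rule superA_equiv_row_permute[OF bij_transpose \<kappa>(2)])
    finally have "superA_equiv (G (r + 2 * (i + 1)))
        (row_permute (\<kappa> \<circ> Transposition.transpose a b) (G r))"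
      by (simp only: row_permute_comp)
    then show ?case using bij_comp[OF bij_transpose \<kappa>(1)] by blast
  next
    case (step2 i)
    then obtain \<kappa> where \<kappa>: "bij \<kappa>" "superA_equiv (G (r + 2 * i)) (row_permute \<kappa> (G r))" by blast
    have "superA_equiv (G (r + 2 * (i - 1))) (row_permute (Transposition.transpose a b) (G (r + 2 * i)))"
      using shift[of "r + 2 * (i - 1)"] by (simp add: algebra_simps)
    also have "superA_equiv \<dots> (row_permute (Transposition.transpose a b) (row_permute \<kappa> (G r)))"
      by (rule superA_equiv_row_permute[OF bij_transpose \<kappa>(2)])
    finally have "superA_equiv (G (r + 2 * (i - 1)))
        (row_permute (\<kappa> \<circ> Transposition.transpose a b) (G r))"
      by (simp only: row_permute_comp)
    then show ?case using bij_comp[OF bij_transpose \<kappa>(1)] by blast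
  qed
  moreover have "p = r + 2 * (p div 2)" unfolding r_def by simp
  ultimately show ?thesis unfolding r_def by metis
qed

lemma superA_equiv_shift2_mod2:
  fixes F :: "real \<Rightarrow> real \<Rightarrow> real^4^4"
  assumes shift1: "\<And>p q. superA_equiv (F p q) (row_permute (Transposition.transpose a b) (F (p + 2) q))"
    and shift2: "\<And>p q. superA_equiv (F p q) (row_permute (Transposition.transpose c d) (F p (q + 2)))"
  shows "\<exists>\<kappa>. bij \<kappa> \<and> superA_equiv (F (of_int p) (of_int q))
            (row_permute \<kappa> (F (of_int (p mod 2)) (of_int (q mod 2))))"
proof -
  obtain \<kappa>1 where \<kappa>1: "bij \<kappa>1"
    "superA_equiv (F (of_int p) (of_int q)) (row_permute \<kappa>1 (F (of_int (p mod 2)) (of_int q)))"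
    using superA_equiv_shift_mod2[where G = "\<lambda>p. F (of_int p) (of_int q)"] shift1 by fastforce
  obtain \<kappa>2 where \<kappa>2: "bij \<kappa>2"
    "superA_equiv (F (of_int (p mod 2)) (of_int q))
       (row_permute \<kappa>2 (F (of_int (p mod 2)) (of_int (q mod 2))))"
    using superA_equiv_shift_mod2[where G = "\<lambda>q. F (of_int (p mod 2)) (of_int q)"] shift2 by fastforce
  have "superA_equiv (F (of_int p) (of_int q))
      (row_permute \<kappa>1 (row_permute \<kappa>2 (F (of_int (p mod 2)) (of_int (q mod 2)))))"
    using superA_equiv_trans[OF \<kappa>1(2) superA_equiv_row_permute[OF \<kappa>1(1) \<kappa>2(2)]] .
  then show ?thesis
    using bij_comp[OF \<kappa>1(1) \<kappa>2(1)] by (auto simp only: row_permute_comp)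
qed

lemma hstrip_mat_mod2:
  assumes "g \<noteq> 0"
  shows "\<exists>\<kappa>. bij \<kappa> \<and> superA_equiv (hstrip_mat g (of_int p) (of_int q))
     (row_permute \<kappa> (hstrip_mat g (of_int (p mod 2)) (of_int (q mod 2))))"
proof (rule superA_equiv_shift2_mod2)
  fix p q
  show "superA_equiv (hstrip_mat g p q) (row_permute (Transposition.transpose 3 4) (hstrip_mat g (p + 2) q))"
    using superA_equiv_gen[of "S_mat 4" "hstrip_mat g p q"] S_mat_4_hstrip_mat[OF assms]
    unfolding superA_gens_def by auto
  show "superA_equiv (hstrip_mat g p q) (row_permute (Transposition.transpose 1 2) (hstrip_mat g p (q + 2)))"
    using superA_equiv_gen[of "transpose (S_mat 1)" "hstrip_mat g p q"] S_mat_1_transpose_hstrip_mat[OF assms]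
    unfolding superA_gens_def by auto
qed

lemma vstrip_mat_mod2:
  assumes "g \<noteq> 0"
  shows "\<exists>\<kappa>. bij \<kappa> \<and> superA_equiv (vstrip_mat g (of_int p) (of_int q))
     (row_permute \<kappa> (vstrip_mat g (of_int (p mod 2)) (of_int (q mod 2))))"
proof (rule superA_equiv_shift2_mod2)
  fix p q
  show "superA_equiv (vstrip_mat g p q) (row_permute (Transposition.transpose 1 2) (vstrip_mat g (p + 2) q))"
    using superA_equiv_gen[of "transpose (S_mat 1)" "vstrip_mat g p q"] S_mat_1_transpose_vstrip_mat[OF assms]
    unfolding superA_gens_def by auto
  show "superA_equiv (vstrip_mat g p q) (row_permute (Transposition.transpose 3 4) (vstrip_mat g p (q + 2)))"
    using superA_equiv_gen[of "S_mat 4" "vstrip_mat g p q"] S_mat_4_vstrip_mat[OF assms]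
    unfolding superA_gens_def by auto
qed

text \<open>Rows of a configuration with curvatures \<open>(0, 0, g, g)\<close>: two parallel lines with opposite
  unit normals \<open>(a, b)\<close>, and two circles of radius \<open>1/g\<close> whose centres are \<open>2/g\<close> apart.\<close>
lemma descartes_rel_strip_shape:
  fixes Z :: "real^4^4"
  assumes rel: "descartes_rel Z" and curv: "curvatures Z = vector [0, 0, g, g]" and g: "g \<noteq> 0"
  defines "a \<equiv> Z$1$3" and "b \<equiv> Z$1$4" and "p \<equiv> Z$3$3" and "q \<equiv> Z$3$4"
    and "x \<equiv> Z$4$3" and "y \<equiv> Z$4$4"
  shows "Z = vector [vector [2 * (a * p + b * q + 1) / g, 0, a, b],
      vector [2 * (1 - a * p - b * q) / g, 0, - a, - b],
      vector [(p\<^sup>2 + q\<^sup>2 - 1) / g, g, p, q], vector [(x\<^sup>2 + y\<^sup>2 - 1) / g, g, x, y]]"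
    and "a\<^sup>2 + b\<^sup>2 = 1" and "a * (x - p) + b * (y - q) = 0" and "(x - p)\<^sup>2 + (y - q)\<^sup>2 = 4"
proof -
  have c: "Z$1$2 = 0" "Z$2$2 = 0" "Z$3$2 = g" "Z$4$2 = g"
    using curv by (simp_all add: vec_eq_iff forall_4)
  have inner: "\<And>i j. aug_inner (Z$i) (Z$j) = (if i = j then 1 else -1)"
    using rel descartes_rel_iff by blast
  have e11: "a\<^sup>2 + b\<^sup>2 = 1"
    using inner[of 1 1] c unfolding a_def b_def by (simp add: aug_inner_def power2_eq_square)
  have "(Z$2$3)\<^sup>2 + (Z$2$4)\<^sup>2 = 1" "a * Z$2$3 + b * Z$2$4 = -1"
    using inner[of 2 2] inner[of 1 2] c unfolding a_def b_def
    by (simp_all add: aug_inner_def power2_eq_square)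
  then have "(a + Z$2$3)\<^sup>2 + (b + Z$2$4)\<^sup>2 = 0"
    using e11 by (simp add: power2_eq_square algebra_simps)
  then have z2: "Z$2$3 = - a" "Z$2$4 = - b"
    by (simp_all add: sum_power2_eq_zero_iff eq_neg_iff_add_eq_0 add.commute)
  have e33: "g * Z$3$1 = p\<^sup>2 + q\<^sup>2 - 1" and e44: "g * Z$4$1 = x\<^sup>2 + y\<^sup>2 - 1"
    using inner[of 3 3] inner[of 4 4] c unfolding p_def q_def x_def y_def
    by (simp_all add: aug_inner_def power2_eq_square algebra_simps)
  have e13: "g * Z$1$1 = 2 * (a * p + b * q + 1)" and e14: "g * Z$1$1 = 2 * (a * x + b * y + 1)"
    using inner[of 1 3] inner[of 1 4] c unfolding a_def b_def p_def q_def x_def y_def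
    by (simp_all add: aug_inner_def algebra_simps)
  have e23: "g * Z$2$1 = 2 * (1 - a * p - b * q)"
    using inner[of 2 3] c z2 unfolding p_def q_def by (simp add: aug_inner_def algebra_simps)
  have e34: "g * Z$3$1 + g * Z$4$1 = 2 * (p * x + q * y) + 2"
    using inner[of 3 4] c unfolding p_def q_def x_def y_def by (simp add: aug_inner_def field_simps)
  show "a * (x - p) + b * (y - q) = 0"
    using e13 e14 by (simp add: algebra_simps)
  have "(x - p)\<^sup>2 + (y - q)\<^sup>2 = (p\<^sup>2 + q\<^sup>2 - 1) + (x\<^sup>2 + y\<^sup>2 - 1) - 2 * (p * x + q * y) + 2"
    by (simp add: power2_eq_square algebra_simps)
  then show "(x - p)\<^sup>2 + (y - q)\<^sup>2 = 4"
    using e33 e44 e34 by linarith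
  show "a\<^sup>2 + b\<^sup>2 = 1" by (rule e11)
  have "Z$1$1 = 2 * (a * p + b * q + 1) / g" "Z$2$1 = 2 * (1 - a * p - b * q) / g"
    "Z$3$1 = (p\<^sup>2 + q\<^sup>2 - 1) / g" "Z$4$1 = (x\<^sup>2 + y\<^sup>2 - 1) / g"
    using e13 e23 e33 e44 g by (simp_all add: field_simps)
  then show "Z = vector [vector [2 * (a * p + b * q + 1) / g, 0, a, b],
      vector [2 * (1 - a * p - b * q) / g, 0, - a, - b],
      vector [(p\<^sup>2 + q\<^sup>2 - 1) / g, g, p, q], vector [(x\<^sup>2 + y\<^sup>2 - 1) / g, g, x, y]]"
    using c z2 unfolding a_def b_def p_def q_def x_def y_def by (simp add: vec_eq_iff forall_4)
qed

lemma int_sum_squares_eq_1: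
  fixes a b :: int
  assumes "a\<^sup>2 + b\<^sup>2 = 1"
  shows "(a = 0 \<and> (b = 1 \<or> b = -1)) \<or> (b = 0 \<and> (a = 1 \<or> a = -1))"
proof -
  have sq: "x\<^sup>2 \<ge> 4" if "\<bar>x\<bar> \<ge> 2" for x :: int
  proof -
    have "2\<^sup>2 \<le> \<bar>x\<bar>\<^sup>2" using that by (intro power_mono) auto
    then show ?thesis by simp
  qed
  have "\<bar>a\<bar> \<le> 1" "\<bar>b\<bar> \<le> 1"
    using sq[of a] sq[of b] assms zero_le_power2[of a] zero_le_power2[of b] by linarith+
  then have "a \<in> {-1, 0, 1}" "b \<in> {-1, 0, 1}" by auto
  then show ?thesis using assms by auto
qed

lemma strip_shape_cases [consumes 5, case_names horizontal vertical]:
  fixes a b p q x y :: real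
  assumes "a \<in> \<int>" "b \<in> \<int>" "a\<^sup>2 + b\<^sup>2 = 1" "a * (x - p) + b * (y - q) = 0"
    "(x - p)\<^sup>2 + (y - q)\<^sup>2 = 4"
  obtains (horizontal) "a = 0" "b = 1 \<or> b = -1" "y = q" "x = p + 2 \<or> x = p - 2"
    | (vertical) "b = 0" "a = 1 \<or> a = -1" "x = p" "y = q + 2 \<or> y = q - 2"
proof -
  obtain m n where mn: "a = of_int m" "b = of_int n" using assms(1,2) Ints_cases by metis
  then have "m\<^sup>2 + n\<^sup>2 = 1" using assms(3) by (metis of_int_add of_int_eq_1_iff of_int_power)
  then have unit: "(a = 0 \<and> (b = 1 \<or> b = -1)) \<or> (b = 0 \<and> (a = 1 \<or> a = -1))"
    using int_sum_squares_eq_1 mn by fastforce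
  have two: "t = 2 \<or> t = -2" if "t\<^sup>2 = 4" for t :: real
    using that power2_eq_iff[of t 2] by simp
  show thesis
  proof (cases "a = 0")
    case True
    moreover from this have "b = 1 \<or> b = -1" using unit by auto
    moreover from calculation have "y = q" using assms(4) by auto
    moreover from this have "x = p + 2 \<or> x = p - 2" using assms(5) two[of "x - p"] by auto
    ultimately show thesis by (rule horizontal)
  next
    case False
    then have "b = 0" "a = 1 \<or> a = -1" using unit by auto
    moreover from this have "x = p" using assms(4) by auto
    moreover from this have "y = q + 2 \<or> y = q - 2" using assms(5) two[of "y - q"] by auto
    ultimately show thesis by (rule vertical)
  qed
qed

lemma descartes_rel_strip:
  fixes Z :: "real^4^4"
  assumes rel: "descartes_rel Z" and curv: "curvatures Z = vector [0, 0, g, g]" and g: "g \<noteq> 0"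
    and ints: "\<forall>i. Z$i$3 \<in> \<int> \<and> Z$i$4 \<in> \<int>"
  shows "\<exists>\<pi> p q. bij \<pi> \<and> p \<in> \<int> \<and> q \<in> \<int> \<and>
           (row_permute \<pi> Z = hstrip_mat g p q \<or> row_permute \<pi> Z = vstrip_mat g p q)"
proof -
  define a b p q x y where "a = Z$1$3" and "b = Z$1$4" and "p = Z$3$3" and "q = Z$3$4"
    and "x = Z$4$3" and "y = Z$4$4"
  note shape = descartes_rel_strip_shape[OF rel curv g, folded a_def b_def p_def q_def x_def y_def]
  have I: "a \<in> \<int>" "b \<in> \<int>" "p \<in> \<int>" "q \<in> \<int>"
    using ints unfolding a_def b_def p_def q_def by auto
  show ?thesis
    using I(1,2) shape(2-4)
  proof (cases rule: strip_shape_cases)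
    case horizontal
    define \<pi> where "\<pi> = (if b = 1 then id else Transposition.transpose 1 2)
      \<circ> (if x = p - 2 then id else Transposition.transpose (3::4) 4)"
    have "row_permute \<pi> Z = hstrip_mat g (if x = p - 2 then p else p + 2) q"
      using horizontal g by (subst shape(1)) (auto simp: \<pi>_def hstrip_mat_def vec_eq_iff forall_4)
    moreover have "bij \<pi>" unfolding \<pi>_def by (intro bij_comp) auto
    moreover have "(if x = p - 2 then p else p + 2) \<in> \<int>" using I by simp
    ultimately show ?thesis using I(4) by blast
  next
    case vertical
    define \<pi> where "\<pi> = (if a = 1 then id else Transposition.transpose 1 2)
      \<circ> (if y = q - 2 then id else Transposition.transpose (3::4) 4)"
    have "row_permute \<pi> Z = vstrip_mat g p (if y = q - 2 then q else q + 2)"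
      using vertical g by (subst shape(1)) (auto simp: \<pi>_def vstrip_mat_def vec_eq_iff forall_4)
    moreover have "bij \<pi>" unfolding \<pi>_def by (intro bij_comp) auto
    moreover have "(if y = q - 2 then q else q + 2) \<in> \<int>" using I by simp
    ultimately show ?thesis using I(3) by blast
  qed
qed

definition strip_mat :: "bool \<Rightarrow> real \<Rightarrow> real \<Rightarrow> real \<Rightarrow> real^4^4" where
  "strip_mat v = (if v then vstrip_mat else hstrip_mat)"

definition vec_dvd :: "int \<Rightarrow> real^'n \<Rightarrow> bool" where
  "vec_dvd h x \<longleftrightarrow> (\<forall>i. \<exists>k::int. x$i = of_int h * of_int k)"

lemma integral_id_mod2_vec_dvd:
  assumes U: "integral_id_mod2 U" and x: "vec_dvd h x"
  shows "vec_dvd h (U *v x)"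
proof -
  obtain k where k: "\<And>j. x$j = of_int h * of_int (k j)"
    using x unfolding vec_dvd_def by metis
  define u where "u i j = \<lfloor>U$i$j\<rfloor>" for i j
  have u: "U$i$j = of_int (u i j)" for i j
    using U unfolding integral_id_mod2_def u_def by (auto elim!: Ints_cases)
  have "(U *v x)$i = of_int h * of_int (\<Sum>j\<in>UNIV. u i j * k j)" for i
    by (simp add: matrix_vector_mult_def u k sum_distrib_left algebra_simps)
  then show ?thesis unfolding vec_dvd_def by blast
qed

lemma superA_vec_dvd_iff:
  assumes "U \<in> superA"
  shows "vec_dvd h (U *v x) \<longleftrightarrow> vec_dvd h x"
proof
  obtain V where "V \<in> superA" "V ** U = mat 1" using superA_invertible[OF assms] by blast
  then have "V *v (U *v x) = x" by (simp add: matrix_vector_mul_assoc)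
  then show "vec_dvd h (U *v x) \<Longrightarrow> vec_dvd h x"
    using integral_id_mod2_vec_dvd superA_integral_id_mod2 \<open>V \<in> superA\<close> by metis
qed (use integral_id_mod2_vec_dvd superA_integral_id_mod2 assms in blast)

lemma exists_perm_sorting_00hh:
  fixes b :: "real^4"
  assumes b: "\<forall>i. b$i = 0 \<or> b$i = h" and sum: "entry_sum b = 2 * h" and h: "h \<noteq> 0"
  shows "\<exists>\<tau>::4 \<Rightarrow> 4. bij \<tau> \<and> (\<chi> i. b $ \<tau> i) = vector [0, 0, h, h]"
proof -
  let ?T = "Transposition.transpose :: 4 \<Rightarrow> 4 \<Rightarrow> 4 \<Rightarrow> 4"
  have "b$1 = 0 \<or> b$1 = h" "b$2 = 0 \<or> b$2 = h" "b$3 = 0 \<or> b$3 = h" "b$4 = 0 \<or> b$4 = h"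
    using b by auto
  then consider "b$1 = 0" "b$2 = 0" "b$3 = h" "b$4 = h" | "b$1 = 0" "b$3 = 0" "b$2 = h" "b$4 = h"
    | "b$1 = 0" "b$4 = 0" "b$2 = h" "b$3 = h" | "b$2 = 0" "b$3 = 0" "b$1 = h" "b$4 = h"
    | "b$2 = 0" "b$4 = 0" "b$1 = h" "b$3 = h" | "b$3 = 0" "b$4 = 0" "b$1 = h" "b$2 = h"
    using sum h unfolding entry_sum_def by (elim disjE) auto
  then show ?thesis
  proof cases
    case 1
    show ?thesis by (rule exI[of _ id]) (use 1 h in \<open>simp add: vec_eq_iff forall_4\<close>)
  next
    case 2
    show ?thesis by (rule exI[of _ "?T 2 3"]) (use 2 h in \<open>simp add: vec_eq_iff forall_4\<close>)
  next
    case 3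
    show ?thesis by (rule exI[of _ "?T 2 4"]) (use 3 h in \<open>simp add: vec_eq_iff forall_4\<close>)
  next
    case 4
    show ?thesis by (rule exI[of _ "?T 1 3"]) (use 4 h in \<open>simp add: vec_eq_iff forall_4\<close>)
  next
    case 5
    show ?thesis by (rule exI[of _ "?T 1 4"]) (use 5 h in \<open>simp add: vec_eq_iff forall_4\<close>)
  next
    case 6
    show ?thesis
      by (rule exI[of _ "?T 1 3 \<circ> ?T 2 4"]) (use 6 h in \<open>simp add: vec_eq_iff forall_4 bij_comp\<close>)
  qed
qed

text \<open>After reduction all curvatures are \<open>0\<close> or half their sum \<open>h\<close>; since the group is
  unimodular it preserves the gcd of the curvatures, which forces \<open>h = g\<close>.\<close>
lemma superA_reduce_to_00gg:
  assumes rel: "descartes_rel W" and ints: "\<forall>i. W$i$2 \<in> \<int>"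
    and gdv: "vec_dvd g (curvatures W)" and gmax: "\<forall>h. vec_dvd h (curvatures W) \<longrightarrow> h dvd g"
    and g: "g \<ge> 1" and pos: "entry_sum (curvatures W) > 0"
  shows "\<exists>U\<in>superA. \<exists>\<tau>. bij \<tau> \<and>
           curvatures (row_permute \<tau> (U ** W)) = vector [0, 0, of_int g, of_int g]"
proof -
  obtain U where U: "U \<in> superA" "entry_sum (U *v curvatures W) > 0"
    "\<forall>i. (U *v curvatures W)$i = 0 \<or> 2 * (U *v curvatures W)$i = entry_sum (U *v curvatures W)"
    using superA_reduce[OF descartes_rel_curvatures[OF rel] _ pos] ints by auto
  define b where "b = U *v curvatures W"
  have bint: "\<forall>i. b$i \<in> \<int>"
    using integral_id_mod2_mv_Ints[OF superA_integral_id_mod2[OF U(1)], of "curvatures W"] ints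
    unfolding b_def by simp
  have "\<exists>i0. 2 * b$i0 = entry_sum b"
  proof (rule ccontr)
    assume "\<not> ?thesis"
    then have "\<forall>i. b$i = 0" using U(3) unfolding b_def by auto
    then show False using U(2) unfolding b_def entry_sum_def by simp
  qed
  then obtain i0 where i0: "2 * b$i0 = entry_sum b" by blast
  obtain h :: int where h: "b$i0 = of_int h" using bint Ints_cases by metis
  have hpos: "h > 0" using i0 h U(2) unfolding b_def by simp
  have b0h: "\<forall>i. b$i = 0 \<or> b$i = of_int h" using U(3) i0 h unfolding b_def by auto
  have "vec_dvd g b" using gdv superA_vec_dvd_iff[OF U(1)] unfolding b_def by blast
  then obtain k where "b$i0 = of_int g * of_int k" unfolding vec_dvd_def by blast
  then have "h = g * k" using h by (metis of_int_eq_iff of_int_mult)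
  then have "g dvd h" by simp
  moreover have "vec_dvd h b"
    unfolding vec_dvd_def
  proof
    fix i
    show "\<exists>k::int. b$i = of_int h * of_int k"
      using b0h[rule_format, of i] by (auto intro: exI[of _ 0] exI[of _ 1])
  qed
  then have "h dvd g" using gmax superA_vec_dvd_iff[OF U(1)] unfolding b_def by blast
  ultimately have hg: "h = g" using hpos g by (simp add: zdvd_antisym_nonneg)
  have "\<forall>i. b$i = 0 \<or> b$i = of_int g" "entry_sum b = 2 * of_int g" "(of_int g :: real) \<noteq> 0"
    using b0h i0 h hg g by auto
  then obtain \<tau> :: "4 \<Rightarrow> 4" where "bij \<tau>" "(\<chi> i. b $ \<tau> i) = vector [0, 0, of_int g, of_int g]"
    using exists_perm_sorting_00hh by blast
  moreover have "curvatures (row_permute \<tau> (U ** W)) = (\<chi> i. b $ \<tau> i)"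
    unfolding b_def curvatures_mult[symmetric] by (simp add: vec_eq_iff)
  ultimately show ?thesis using U(1) by auto
qed

lemma strip_mat_mod2:
  assumes "g \<noteq> 0"
  shows "\<exists>\<kappa>. bij \<kappa> \<and> superA_equiv (strip_mat v g (of_int p) (of_int q))
           (row_permute \<kappa> (strip_mat v g (of_bool (odd p)) (of_bool (odd q))))"
proof -
  have "of_int (p mod 2) = (of_bool (odd p) :: real)" "of_int (q mod 2) = (of_bool (odd q) :: real)"
    by (auto simp: odd_iff_mod_2_eq_one even_iff_mod_2_eq_zero)
  then show ?thesis
    using hstrip_mat_mod2[OF assms, of p q] vstrip_mat_mod2[OF assms, of p q]
    unfolding strip_mat_def by (cases v) simp_all
qed

lemma integral_id_mod2_mult_Ints:
  "integral_id_mod2 U \<Longrightarrow> \<forall>k. W$k$j \<in> \<int> \<Longrightarrow> (U ** W)$i$j \<in> \<int>"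
  unfolding matrix_mult_nth_as_mv by (rule integral_id_mod2_mv_Ints) simp_all

lemma superA_equiv_strip_mat:
  fixes W :: "real^4^4" and g :: int
  assumes rel: "descartes_rel W" and ints: "\<forall>i. W$i$2 \<in> \<int> \<and> W$i$3 \<in> \<int> \<and> W$i$4 \<in> \<int>"
    and gdv: "vec_dvd g (curvatures W)" and gmax: "\<forall>h. vec_dvd h (curvatures W) \<longrightarrow> h dvd g"
    and g: "g \<ge> 1" and pos: "entry_sum (curvatures W) > 0"
  shows "\<exists>\<sigma> v a b. bij \<sigma> \<and>
           superA_equiv W (row_permute \<sigma> (strip_mat v (of_int g) (of_bool a) (of_bool b)))"
proof -
  obtain U \<tau> where U: "U \<in> superA" "bij \<tau>"
    "curvatures (row_permute \<tau> (U ** W)) = vector [0, 0, of_int g, of_int g]"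
    using superA_reduce_to_00gg[OF rel _ gdv gmax g pos] ints by blast
  define Z where "Z = row_permute \<tau> (U ** W)"
  have "descartes_rel Z"
    unfolding Z_def by (intro descartes_rel_row_permute superA_descartes_rel U rel)
  moreover have "\<forall>i. Z$i$3 \<in> \<int> \<and> Z$i$4 \<in> \<int>"
    using integral_id_mod2_mult_Ints[OF superA_integral_id_mod2[OF U(1)], of W] ints
    unfolding Z_def by simp
  moreover have "(of_int g :: real) \<noteq> 0" using g by simp
  ultimately obtain \<pi> p q where \<pi>: "bij \<pi>" "p \<in> \<int>" "q \<in> \<int>"
    "row_permute \<pi> Z = hstrip_mat (of_int g) p q \<or> row_permute \<pi> Z = vstrip_mat (of_int g) p q"
    using descartes_rel_strip[of Z "of_int g"] U(3) unfolding Z_def by blast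
  obtain v where v: "row_permute \<pi> Z = strip_mat v (of_int g) p q"
    using \<pi>(4)
  proof (elim disjE)
    assume "row_permute \<pi> Z = hstrip_mat (of_int g) p q"
    then show thesis using that[of False] by (simp add: strip_mat_def)
  next
    assume "row_permute \<pi> Z = vstrip_mat (of_int g) p q"
    then show thesis using that[of True] by (simp add: strip_mat_def)
  qed
  obtain m n where mn: "p = of_int m" "q = of_int n" using \<pi>(2,3) Ints_cases by metis
  obtain \<kappa> where \<kappa>: "bij \<kappa>" "superA_equiv (strip_mat v (of_int g) p q)
      (row_permute \<kappa> (strip_mat v (of_int g) (of_bool (odd m)) (of_bool (odd n))))"
    using strip_mat_mod2[of "of_int g" v m n] g mn by auto
  have "U ** W = row_permute (inv \<tau>) Z"
    unfolding Z_def by (rule row_permute_inv[OF U(2), symmetric])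
  also have "Z = row_permute (inv \<pi>) (strip_mat v (of_int g) p q)"
    using row_permute_inv[OF \<pi>(1), of Z] v by metis
  finally have "superA_equiv W (row_permute (inv \<tau>) (row_permute (inv \<pi>) (strip_mat v (of_int g) p q)))"
    using U(1) unfolding superA_equiv_def by blast
  also have "superA_equiv \<dots> (row_permute (inv \<tau>) (row_permute (inv \<pi>)
      (row_permute \<kappa> (strip_mat v (of_int g) (of_bool (odd m)) (of_bool (odd n))))))"
    using U(2) \<pi>(1) \<kappa>(2) by (intro superA_equiv_row_permute bij_imp_bij_inv)
  finally have "superA_equiv W (row_permute (\<kappa> \<circ> inv \<pi> \<circ> inv \<tau>)
      (strip_mat v (of_int g) (of_bool (odd m)) (of_bool (odd n))))"
    by (simp only: row_permute_comp)
  moreover have "bij (\<kappa> \<circ> inv \<pi> \<circ> inv \<tau>)"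
    using \<kappa>(1) U(2) \<pi>(1) by (intro bij_comp bij_imp_bij_inv)
  ultimately show ?thesis by blast
qed

definition kissing :: "ocircle \<Rightarrow> ocircle \<Rightarrow> bool" where
  "kissing A B \<longleftrightarrow> tangent A B \<and> oc_interior A \<inter> oc_interior B = {}"

lemma kissing_commute: "kissing A B \<longleftrightarrow> kissing B A"
  unfolding kissing_def tangent_def by blast

lemma pos_descartes_iff_kissing:
  "pos_descartes D \<longleftrightarrow> (\<forall>i. wf_oc (D i)) \<and> (\<forall>i j. i \<noteq> j \<longrightarrow> kissing (D i) (D j))"
  unfolding pos_descartes_def kissing_def by blast

lemma dist_complex_sq: "(dist (c::complex) c')\<^sup>2 = (Re c - Re c')\<^sup>2 + (Im c - Im c')\<^sup>2"
  by (simp add: dist_norm cmod_power2)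

lemma dist_add_scaled: "dist c (c + of_real t * w) = \<bar>t\<bar> * cmod w"
  by (simp add: dist_norm norm_mult)

lemma Re_add_scaled_mult_cnj: "Re ((c + of_real t * w) * cnj n) = Re (c * cnj n) + t * Re (w * cnj n)"
  by (simp add: algebra_simps)

lemma Re_mult_cnj_self: "cmod n = 1 \<Longrightarrow> Re (n * cnj n) = 1"
  using cmod_power2[of n] by (simp add: power2_eq_square)

lemma cmod_mult_self: "cmod z * cmod z = Re z * Re z + Im z * Im z"
  using cmod_power2[of z] by (simp add: power2_eq_square)

lemma aug_inner_self: "wf_oc A \<Longrightarrow> aug_inner (aug_row A) (aug_row A) = 1"
proof (cases A)
  case (OCirc c r b)
  then show "wf_oc A \<Longrightarrow> ?thesis"
    by (cases b) (simp_all add: aug_inner_def field_simps power2_eq_square cmod_mult_self)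
next
  case (OLine n d)
  then show "wf_oc A \<Longrightarrow> ?thesis"
    using cmod_power2[of n] by (simp add: aug_inner_def power2_eq_square)
qed

lemma aug_inner_OCirc_OCirc:
  assumes "r > 0" "r' > 0"
  shows "aug_inner (aug_row (OCirc c r b)) (aug_row (OCirc c' r' b'))
    = (if b = b' then 1 else -1) * (r\<^sup>2 + r'\<^sup>2 - (dist c c')\<^sup>2) / (2 * r * r')"
  using assms unfolding dist_complex_sq
  by (cases b; cases b') (simp_all add: aug_inner_def field_simps power2_eq_square cmod_mult_self)

lemma aug_inner_OCirc_OLine:
  "r > 0 \<Longrightarrow> aug_inner (aug_row (OCirc c r b)) (aug_row (OLine n d))
    = (if b then 1 else -1) * (Re (c * cnj n) - d) / r"
  by (cases b) (simp_all add: aug_inner_def field_simps)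

lemma aug_inner_OLine_OLine:
  "aug_inner (aug_row (OLine n d)) (aug_row (OLine n' d')) = Re n * Re n' + Im n * Im n'"
  by (simp add: aug_inner_def)

lemma dist_eq_radius_sum:
  fixes c c' p :: "'a::real_normed_vector"
  assumes r: "r > 0" "r' > 0" and p: "dist c p = r" "dist c' p = r'"
    and disjoint: "ball c r \<inter> ball c' r' = {}"
  shows "dist c c' = r + r'"
proof (rule antisym)
  show "dist c c' \<le> r + r'" using dist_triangle[of c c' p] p by (simp add: dist_commute)
  show "r + r' \<le> dist c c'"
  proof (rule ccontr)
    assume lt: "\<not> r + r' \<le> dist c c'"
    define t where "t = r / (r + r')"
    define z where "z = c + t *\<^sub>R (c' - c)"
    have t: "0 < t" "t < 1" "t * (r + r') = r" "(1 - t) * (r + r') = r'"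
      unfolding t_def using r by (auto simp: field_simps)
    have "dist c z = t * dist c c'"
      unfolding z_def using t by (simp add: dist_norm norm_minus_commute)
    also have "\<dots> < r" using lt t(1,3) by (metis mult_strict_left_mono not_le)
    finally have "dist c z < r" .
    have "c' - z = (1 - t) *\<^sub>R (c' - c)" unfolding z_def by (simp add: algebra_simps)
    then have "dist c' z = (1 - t) * dist c c'"
      using t by (simp add: dist_norm norm_minus_commute)
    also have "\<dots> < r'" using lt t(2,4) by (metis diff_gt_0_iff_gt mult_strict_left_mono not_le)
    finally show False using \<open>dist c z < r\<close> disjoint by auto
  qed
qed

lemma dist_eq_radius_diff:
  fixes c c' p :: "'a::euclidean_space"
  assumes r: "r > 0" and p: "dist c p = r" "dist c' p = r'"
    and inside: "ball c r \<inter> - cball c' r' = {}"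
  shows "dist c c' = r' - r"
proof (rule antisym)
  have "ball c r \<subseteq> cball c' r'" using inside by auto
  then have "dist c c' + r \<le> r' \<or> r \<le> 0" using ball_subset_cball_iff by blast
  then show "dist c c' \<le> r' - r" using r by linarith
  show "r' - r \<le> dist c c'" using dist_triangle[of c' p c] p by (simp add: dist_commute)
qed

lemma disc_touching_line:
  assumes r: "r > 0" and n: "cmod n = 1" and p: "dist c p = r" "Re (p * cnj n) = d"
    and disjoint: "ball c r \<inter> {z. Re (z * cnj n) > d} = {}"
  shows "Re (c * cnj n) = d - r"
proof -
  have "\<bar>Re ((c - p) * cnj n)\<bar> \<le> cmod ((c - p) * cnj n)" by (rule abs_Re_le_cmod)
  also have "\<dots> = r" using n p by (simp add: norm_mult dist_norm)
  finally have le: "\<bar>Re (c * cnj n) - d\<bar> \<le> r" using p by (simp add: algebra_simps)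
  have "Re (c * cnj n) + r \<le> d"
  proof (rule ccontr)
    assume above: "\<not> Re (c * cnj n) + r \<le> d"
    define t where "t = (r + (d - Re (c * cnj n))) / 2"
    define z where "z = c + of_real t * n"
    have t: "0 \<le> t" "t < r" unfolding t_def using le above by auto
    have "dist c z < r" unfolding z_def dist_add_scaled using t n by simp
    moreover have "Re (z * cnj n) > d"
      using above by (simp only: z_def Re_add_scaled_mult_cnj Re_mult_cnj_self[OF n] t_def mult_1_right)
        (simp add: field_simps)
    ultimately show False using disjoint by auto
  qed
  with le show ?thesis by linarith
qed

lemma outside_disc_meets_halfplane:
  assumes n: "cmod n = 1"
  shows "- cball c r \<inter> {z. Re (z * cnj n) > d} \<noteq> {}"
proof -
  define t where "t = \<bar>r\<bar> + \<bar>d\<bar> + cmod c + 1"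
  define z where "z = c + of_real t * n"
  have t: "t > 0"
    using abs_ge_zero[of r] abs_ge_zero[of d] norm_ge_zero[of c] unfolding t_def by linarith
  have "dist c z = t" unfolding z_def dist_add_scaled using t n by simp
  then have "dist c z > r"
    using abs_ge_self[of r] abs_ge_zero[of d] norm_ge_zero[of c] unfolding t_def by linarith
  then have "z \<in> - cball c r" by simp
  moreover have "\<bar>Re (c * cnj n)\<bar> \<le> cmod c"
    using abs_Re_le_cmod[of "c * cnj n"] n by (simp add: norm_mult)
  then have "Re (z * cnj n) > d"
    unfolding z_def Re_add_scaled_mult_cnj Re_mult_cnj_self[OF n] t_def mult_1_right
    using abs_ge_self[of d] abs_ge_zero[of r] by linarith
  ultimately show ?thesis by blast
qed

lemma disjoint_halfplanes_opposite_normals: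
  assumes n: "cmod n = 1" "cmod n' = 1"
    and parallel: "\<forall>z. \<not> (Re (z * cnj n) = d \<and> Re (z * cnj n') = d')"
    and disjoint: "{z. Re (z * cnj n) > d} \<inter> {z. Re (z * cnj n') > d'} = {}"
  shows "Re n * Re n' + Im n * Im n' = -1"
proof -
  define a b a' b' where "a = Re n" and "b = Im n" and "a' = Re n'" and "b' = Im n'"
  have u: "a\<^sup>2 + b\<^sup>2 = 1" "a'\<^sup>2 + b'\<^sup>2 = 1"
    using n cmod_power2[of n] cmod_power2[of n'] unfolding a_def b_def a'_def b'_def by simp_all
  have det: "a * b' - b * a' = 0"
  proof (rule ccontr)
    assume "a * b' - b * a' \<noteq> 0"
    define D where "D = a * b' - b * a'"
    define z where "z = Complex ((d * b' - b * d') / D) ((a * d' - d * a') / D)"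
    have "Re (z * cnj n) = ((d * b' - b * d') * a + (a * d' - d * a') * b) / D"
      "Re (z * cnj n') = ((d * b' - b * d') * a' + (a * d' - d * a') * b') / D"
      unfolding z_def a_def b_def a'_def b'_def by (simp_all add: add_divide_distrib)
    moreover have "(d * b' - b * d') * a + (a * d' - d * a') * b = d * D"
      "(d * b' - b * d') * a' + (a * d' - d * a') * b' = d' * D"
      unfolding D_def by (simp_all add: algebra_simps)
    ultimately have "Re (z * cnj n) = d" "Re (z * cnj n') = d'"
      using \<open>a * b' - b * a' \<noteq> 0\<close> unfolding D_def by simp_all
    then show False using parallel by blast
  qed
  have "(a * a' + b * b')\<^sup>2 + (a * b' - b * a')\<^sup>2 = (a\<^sup>2 + b\<^sup>2) * (a'\<^sup>2 + b'\<^sup>2)"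
    by (simp add: power2_eq_square algebra_simps)
  then have "(a * a' + b * b')\<^sup>2 = 1\<^sup>2" using u det by simp
  then have pm: "a * a' + b * b' = 1 \<or> a * a' + b * b' = -1" using power2_eq_iff by blast
  have "a * a' + b * b' \<noteq> 1"
  proof
    assume "a * a' + b * b' = 1"
    then have "(a - a')\<^sup>2 + (b - b')\<^sup>2 = 0"
      using u by (simp add: power2_eq_square algebra_simps)
    then have "n' = n"
      unfolding a_def b_def a'_def b'_def by (simp add: sum_power2_eq_zero_iff complex_eq_iff)
    define z where "z = of_real (\<bar>d\<bar> + \<bar>d'\<bar> + 1) * n"
    have "Re (z * cnj n) = \<bar>d\<bar> + \<bar>d'\<bar> + 1"
      using Re_mult_cnj_self[OF n(1)] unfolding z_def by (simp add: mult.assoc)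
    then have "z \<in> {z. Re (z * cnj n) > d} \<inter> {z. Re (z * cnj n') > d'}"
      using \<open>n' = n\<close> by auto
    then show False using disjoint by blast
  qed
  with pm show ?thesis unfolding a_def b_def a'_def b'_def by simp
qed

lemma kissing_OCirc_OCirc_aug_inner:
  assumes r: "r > 0" "r' > 0" and kiss: "kissing (OCirc c r b) (OCirc c' r' b')"
  shows "aug_inner (aug_row (OCirc c r b)) (aug_row (OCirc c' r' b')) = -1"
proof -
  obtain z where z: "dist c z = r" "dist c' z = r'"
    using kiss unfolding kissing_def tangent_def by auto
  have disjoint: "oc_interior (OCirc c r b) \<inter> oc_interior (OCirc c' r' b') = {}"
    using kiss unfolding kissing_def by blast
  consider "b" "b'" | "b" "\<not> b'" | "\<not> b" "b'" | "\<not> b" "\<not> b'" by blast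
  then show ?thesis
  proof cases
    case 1
    then have "ball c r \<inter> ball c' r' = {}" using disjoint by auto
    then have d: "dist c c' = r + r'" using dist_eq_radius_sum[OF r z] by simp
    show ?thesis unfolding aug_inner_OCirc_OCirc[OF r] d using 1 r by (simp add: field_simps power2_eq_square)
  next
    case 2
    then have "ball c r \<inter> - cball c' r' = {}" using disjoint by auto
    then have d: "dist c c' = r' - r" using dist_eq_radius_diff[OF r(1) z] by simp
    show ?thesis unfolding aug_inner_OCirc_OCirc[OF r] d using 2 r by (simp add: field_simps power2_eq_square)
  next
    case 3
    then have "ball c' r' \<inter> - cball c r = {}" using disjoint by auto
    then have d: "dist c c' = r - r'" using dist_eq_radius_diff[OF r(2) z(2,1)] by (simp add: dist_commute)
    show ?thesis unfolding aug_inner_OCirc_OCirc[OF r] d using 3 r by (simp add: field_simps power2_eq_square)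
  next
    case 4
    then have "None \<in> oc_interior (OCirc c r b) \<inter> oc_interior (OCirc c' r' b')" by simp
    then show ?thesis using disjoint by blast
  qed
qed

lemma kissing_OCirc_OLine_aug_inner:
  assumes r: "r > 0" and n: "cmod n = 1" and kiss: "kissing (OCirc c r b) (OLine n d)"
  shows "aug_inner (aug_row (OCirc c r b)) (aug_row (OLine n d)) = -1"
proof -
  obtain z where z: "dist c z = r" "Re (z * cnj n) = d"
    using kiss unfolding kissing_def tangent_def by auto
  have disjoint: "oc_interior (OCirc c r b) \<inter> oc_interior (OLine n d) = {}"
    using kiss unfolding kissing_def by blast
  show ?thesis
  proof (cases b)
    case True
    then have "ball c r \<inter> {z. Re (z * cnj n) > d} = {}" using disjoint by auto
    then have "Re (c * cnj n) = d - r" using disc_touching_line[OF r n z] by simp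
    then show ?thesis unfolding aug_inner_OCirc_OLine[OF r] using True r by simp
  next
    case False
    obtain w where "w \<in> - cball c r \<inter> {z. Re (z * cnj n) > d}"
      using outside_disc_meets_halfplane[OF n] by blast
    then have "Some w \<in> oc_interior (OCirc c r b) \<inter> oc_interior (OLine n d)" using False by auto
    then show ?thesis using disjoint by blast
  qed
qed

lemma kissing_OLine_OLine_aug_inner:
  assumes n: "cmod n = 1" "cmod n' = 1" and kiss: "kissing (OLine n d) (OLine n' d')"
  shows "aug_inner (aug_row (OLine n d)) (aug_row (OLine n' d')) = -1"
proof -
  obtain p where unique: "\<And>q. q \<in> oc_boundary (OLine n d) \<Longrightarrow> q \<in> oc_boundary (OLine n' d') \<Longrightarrow> q = p"
    using kiss unfolding kissing_def tangent_def by blast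
  have "\<not> (Re (z * cnj n) = d \<and> Re (z * cnj n') = d')" for z
    using unique[of None] unique[of "Some z"] by auto
  moreover have "{z. Re (z * cnj n) > d} \<inter> {z. Re (z * cnj n') > d'} = {}"
    using kiss unfolding kissing_def by auto
  ultimately show ?thesis
    using disjoint_halfplanes_opposite_normals[OF n] unfolding aug_inner_OLine_OLine by blast
qed

lemma kissing_aug_inner:
  assumes "wf_oc A" "wf_oc B" "kissing A B"
  shows "aug_inner (aug_row A) (aug_row B) = -1"
proof (cases A)
  case A: (OCirc c r b)
  show ?thesis
  proof (cases B)
    case (OCirc c' r' b')
    then show ?thesis using assms A kissing_OCirc_OCirc_aug_inner by simp
  next
    case (OLine n d)
    then show ?thesis using assms A kissing_OCirc_OLine_aug_inner by simp
  qed
next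
  case A: (OLine n d)
  show ?thesis
  proof (cases B)
    case (OCirc c r b)
    then have "aug_inner (aug_row B) (aug_row A) = -1"
      using assms A kissing_OCirc_OLine_aug_inner kissing_commute by simp
    then show ?thesis by (simp add: aug_inner_commute)
  next
    case (OLine n' d')
    then show ?thesis using assms A kissing_OLine_OLine_aug_inner by simp
  qed
qed

lemma W_mat_nth [simp]: "W_mat D $ i = aug_row (D i)"
  by (simp add: W_mat_def)

lemma pos_descartes_descartes_rel: "pos_descartes D \<Longrightarrow> descartes_rel (W_mat D)"
  unfolding descartes_rel_iff pos_descartes_iff_kissing
  by (auto simp: aug_inner_self kissing_aug_inner)

lemma aug_row_oc_reverse: "aug_row (oc_reverse C) = - aug_row C"
  by (cases C rule: oc_reverse.cases) (simp_all add: vec_eq_iff forall_4 Let_def)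

lemma W_mat_oc_reverse: "W_mat (oc_reverse \<circ> D) = - W_mat D"
  by (simp add: vec_eq_iff aug_row_oc_reverse)

lemma oo_descartes_descartes_rel: "oo_descartes D \<Longrightarrow> descartes_rel (W_mat D)"
  unfolding oo_descartes_def
proof (elim disjE)
  assume "pos_descartes (oc_reverse \<circ> D)"
  then have "descartes_rel (- W_mat D)"
    using pos_descartes_descartes_rel W_mat_oc_reverse by metis
  then show ?thesis using descartes_rel_uminus[of "- W_mat D"] by simp
qed (rule pos_descartes_descartes_rel)

lemma tangent_iff_singleton: "tangent A B \<longleftrightarrow> (\<exists>p. oc_boundary A \<inter> oc_boundary B = {p})"
  unfolding tangent_def by (rule iffI) (blast, metis Int_iff insertI1 singletonD)

lemma sphere_Int_sphere_touching:
  fixes c c' :: "'a::real_inner"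
  assumes r: "r > 0" "r' > 0" and d: "dist c c' = r + r'"
  shows "sphere c r \<inter> sphere c' r' = {c + (r / (r + r')) *\<^sub>R (c' - c)}"
proof -
  have on_segment: "(r + r') *\<^sub>R w = r' *\<^sub>R c + r *\<^sub>R c'" if "dist c w = r" "dist c' w = r'" for w
  proof -
    have "dist c c' = dist c w + dist w c'" using that d by (simp add: dist_commute)
    then have "norm (c - w) *\<^sub>R (w - c') = norm (w - c') *\<^sub>R (c - w)" using dist_triangle_eq by blast
    then have "r *\<^sub>R (w - c') = r' *\<^sub>R (c - w)" using that by (simp add: dist_norm norm_minus_commute)
    then show ?thesis by (simp add: algebra_simps)
  qed
  define z where "z = c + (r / (r + r')) *\<^sub>R (c' - c)"
  have "(r + r') *\<^sub>R z = (r + r') *\<^sub>R c + ((r + r') * (r / (r + r'))) *\<^sub>R (c' - c)"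
    unfolding z_def by (simp add: scaleR_add_right)
  also have "(r + r') * (r / (r + r')) = r" using r by simp
  finally have "(r + r') *\<^sub>R z = r' *\<^sub>R c + r *\<^sub>R c'" by (simp add: algebra_simps)
  then have z_iff: "w = z \<longleftrightarrow> (r + r') *\<^sub>R w = r' *\<^sub>R c + r *\<^sub>R c'" for w
    using r by (metis add_pos_pos order_less_irrefl scaleR_cancel_left)
  have "1 - r / (r + r') = r' / (r + r')" using r by (simp add: field_simps)
  moreover have "c - z = - (r / (r + r')) *\<^sub>R (c' - c)" "c' - z = (1 - r / (r + r')) *\<^sub>R (c' - c)"
    unfolding z_def scaleR_diff_left by (simp_all add: algebra_simps)
  ultimately have "c - z = - (r / (r + r')) *\<^sub>R (c' - c)" "c' - z = (r' / (r + r')) *\<^sub>R (c' - c)"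
    by simp_all
  then have "dist c z = r / (r + r') * dist c c'" "dist c' z = r' / (r + r') * dist c c'"
    using r by (simp_all add: dist_norm norm_minus_commute)
  then have "dist c z = r" "dist c' z = r'" using r d by simp_all
  then show ?thesis
    using on_segment z_iff unfolding z_def[symmetric] by auto
qed

lemma kissing_OCirc_OCirc_if_dist:
  assumes r: "r > 0" "r' > 0" and d: "dist c c' = r + r'"
  shows "kissing (OCirc c r True) (OCirc c' r' True)"
proof -
  have "oc_boundary (OCirc c r True) \<inter> oc_boundary (OCirc c' r' True) = Some ` (sphere c r \<inter> sphere c' r')"
    by (simp add: image_Int)
  then have "tangent (OCirc c r True) (OCirc c' r' True)"
    unfolding tangent_iff_singleton sphere_Int_sphere_touching[OF r d] by auto
  moreover have "ball c r \<inter> ball c' r' = {}" using d by (intro disjoint_ballI) simp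
  ultimately show ?thesis unfolding kissing_def by auto
qed

lemma kissing_OLine_OCirc_if_dist:
  assumes r: "r > 0" and n: "cmod n = 1" and e: "Re (c * cnj n) = d - r"
  shows "kissing (OLine n d) (OCirc c r True)"
proof -
  define z0 where "z0 = c + of_real r * n"
  have unique: "z = z0" if "dist c z = r" "Re (z * cnj n) = d" for z
  proof -
    define w where "w = z - c"
    have w1: "(Re w)\<^sup>2 + (Im w)\<^sup>2 = r\<^sup>2"
      using that(1) dist_complex_sq[of z c] unfolding w_def by (simp add: dist_commute)
    have w2: "Re w * Re n + Im w * Im n = r"
      using that(2) e unfolding w_def by (simp add: algebra_simps)
    have n1: "(Re n)\<^sup>2 + (Im n)\<^sup>2 = 1" using n cmod_power2[of n] by simp
    have "(Re w - r * Re n)\<^sup>2 + (Im w - r * Im n)\<^sup>2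
        = ((Re w)\<^sup>2 + (Im w)\<^sup>2) - 2 * r * (Re w * Re n + Im w * Im n) + r\<^sup>2 * ((Re n)\<^sup>2 + (Im n)\<^sup>2)"
      by (simp add: power2_eq_square algebra_simps)
    also have "\<dots> = 0" unfolding w1 w2 n1 by (simp add: power2_eq_square)
    finally have "Re w = r * Re n \<and> Im w = r * Im n" by (simp add: sum_power2_eq_zero_iff)
    then show ?thesis unfolding z0_def w_def by (simp add: complex_eq_iff)
  qed
  have "dist c z0 = r" "Re (z0 * cnj n) = d"
    unfolding z0_def dist_add_scaled Re_add_scaled_mult_cnj Re_mult_cnj_self[OF n] using r n e by simp_all
  then have "{z. Re (z * cnj n) = d} \<inter> sphere c r = {z0}"
  proof (intro equalityI subsetI)
    fix z assume "z \<in> {z. Re (z * cnj n) = d} \<inter> sphere c r"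
    then show "z \<in> {z0}" using unique[of z] by simp
  qed simp
  moreover have "oc_boundary (OLine n d) \<inter> oc_boundary (OCirc c r True)
      = Some ` ({z. Re (z * cnj n) = d} \<inter> sphere c r)"
    by auto
  ultimately have "oc_boundary (OLine n d) \<inter> oc_boundary (OCirc c r True) = {Some z0}"
    by simp
  moreover have "{z. Re (z * cnj n) > d} \<inter> ball c r = {}"
  proof (rule ccontr)
    assume "\<not> ?thesis"
    then obtain z where z: "Re (z * cnj n) > d" "dist c z < r" by auto
    have "\<bar>Re ((z - c) * cnj n)\<bar> \<le> cmod ((z - c) * cnj n)" by (rule abs_Re_le_cmod)
    also have "\<dots> = dist c z" using n by (simp add: norm_mult dist_norm norm_minus_commute)
    finally have "Re (z * cnj n) - Re (c * cnj n) \<le> dist c z" by (simp add: algebra_simps)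
    then show False using z e by linarith
  qed
  ultimately show ?thesis unfolding kissing_def tangent_iff_singleton by auto
qed

lemma kissing_opposite_OLines:
  assumes "d + d' > 0"
  shows "kissing (OLine n d) (OLine (- n) d')"
proof -
  have "oc_boundary (OLine n d) \<inter> oc_boundary (OLine (- n) d') = {None}"
    using assms by auto
  moreover have "oc_interior (OLine n d) \<inter> oc_interior (OLine (- n) d') = {}"
    using assms by auto
  ultimately show ?thesis unfolding kissing_def tangent_iff_singleton by blast
qed

lemma pos_descartes_if_kissing:
  assumes "\<forall>i. wf_oc (D i)" "kissing (D 1) (D 2)" "kissing (D 1) (D 3)" "kissing (D 1) (D 4)"
    "kissing (D 2) (D 3)" "kissing (D 2) (D 4)" "kissing (D 3) (D 4)"
  shows "pos_descartes D"
proof -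
  have "kissing (D i) (D j)" if "i \<noteq> j" for i j
    using that assms(2-7) exhaust_4[of i] exhaust_4[of j] kissing_commute by auto
  then show ?thesis using assms(1) unfolding pos_descartes_iff_kissing by blast
qed

text \<open>The strip between the lines \<open>Im z = (q \<plusminus> 1)/g\<close> (interiors outside the strip) and two
  kissing circles of radius \<open>1/g\<close> inside it, centred at \<open>(p + i q)/g\<close> and \<open>(p - 2 + i q)/g\<close>;
  \<open>vstrip\<close> is its mirror image in the diagonal \<open>Re z = Im z\<close>.\<close>
definition hstrip :: "real \<Rightarrow> real \<Rightarrow> real \<Rightarrow> config" where
  "hstrip g p q = (\<lambda>i. if i = 1 then OLine \<i> ((q + 1) / g) else if i = 2 then OLine (- \<i>) ((1 - q) / g)
     else if i = 3 then OCirc (Complex (p / g) (q / g)) (1 / g) True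
     else OCirc (Complex ((p - 2) / g) (q / g)) (1 / g) True)"

definition vstrip :: "real \<Rightarrow> real \<Rightarrow> real \<Rightarrow> config" where
  "vstrip g p q = (\<lambda>i. if i = 1 then OLine 1 ((p + 1) / g) else if i = 2 then OLine (- 1) ((1 - p) / g)
     else if i = 3 then OCirc (Complex (p / g) (q / g)) (1 / g) True
     else OCirc (Complex (p / g) ((q - 2) / g)) (1 / g) True)"

definition strip :: "bool \<Rightarrow> real \<Rightarrow> real \<Rightarrow> real \<Rightarrow> config" where
  "strip v = (if v then vstrip else hstrip)"

lemma hstrip_nth:
  "hstrip g p q 1 = OLine \<i> ((q + 1) / g)" "hstrip g p q 2 = OLine (- \<i>) ((1 - q) / g)"
  "hstrip g p q 3 = OCirc (Complex (p / g) (q / g)) (1 / g) True"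
  "hstrip g p q 4 = OCirc (Complex ((p - 2) / g) (q / g)) (1 / g) True"
  by (simp_all add: hstrip_def)

lemma vstrip_nth:
  "vstrip g p q 1 = OLine 1 ((p + 1) / g)" "vstrip g p q 2 = OLine (- 1) ((1 - p) / g)"
  "vstrip g p q 3 = OCirc (Complex (p / g) (q / g)) (1 / g) True"
  "vstrip g p q 4 = OCirc (Complex (p / g) ((q - 2) / g)) (1 / g) True"
  by (simp_all add: vstrip_def)

lemma dist_eq_if_sq: "(Re c - Re c')\<^sup>2 + (Im c - Im c')\<^sup>2 = x\<^sup>2 \<Longrightarrow> x \<ge> 0 \<Longrightarrow> dist c c' = x"
  using dist_complex_sq[of c c'] power2_eq_iff_nonneg[of "dist c c'" x] by simp

lemma pos_descartes_hstrip:
  assumes g: "g > 0"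
  shows "pos_descartes (hstrip g p q)"
proof (rule pos_descartes_if_kissing)
  have r: "1 / g > 0" using g by simp
  show "\<forall>i. wf_oc (hstrip g p q i)" using g by (simp add: hstrip_def)
  show "kissing (hstrip g p q 1) (hstrip g p q 2)"
    unfolding hstrip_nth by (rule kissing_opposite_OLines) (use g in \<open>simp add: field_simps\<close>)
  show "kissing (hstrip g p q 1) (hstrip g p q 3)" "kissing (hstrip g p q 1) (hstrip g p q 4)"
    "kissing (hstrip g p q 2) (hstrip g p q 3)" "kissing (hstrip g p q 2) (hstrip g p q 4)"
    unfolding hstrip_nth by (rule kissing_OLine_OCirc_if_dist[OF r]; use g in \<open>simp add: field_simps\<close>)+
  show "kissing (hstrip g p q 3) (hstrip g p q 4)"
    unfolding hstrip_nth
    by (rule kissing_OCirc_OCirc_if_dist[OF r r], rule dist_eq_if_sq)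
      (use g in \<open>simp_all add: field_simps power2_eq_square\<close>)
qed

lemma pos_descartes_vstrip:
  assumes g: "g > 0"
  shows "pos_descartes (vstrip g p q)"
proof (rule pos_descartes_if_kissing)
  have r: "1 / g > 0" using g by simp
  show "\<forall>i. wf_oc (vstrip g p q i)" using g by (simp add: vstrip_def)
  show "kissing (vstrip g p q 1) (vstrip g p q 2)"
    unfolding vstrip_nth by (rule kissing_opposite_OLines) (use g in \<open>simp add: field_simps\<close>)
  show "kissing (vstrip g p q 1) (vstrip g p q 3)" "kissing (vstrip g p q 1) (vstrip g p q 4)"
    "kissing (vstrip g p q 2) (vstrip g p q 3)" "kissing (vstrip g p q 2) (vstrip g p q 4)"
    unfolding vstrip_nth by (rule kissing_OLine_OCirc_if_dist[OF r]; use g in \<open>simp add: field_simps\<close>)+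
  show "kissing (vstrip g p q 3) (vstrip g p q 4)"
    unfolding vstrip_nth
    by (rule kissing_OCirc_OCirc_if_dist[OF r r], rule dist_eq_if_sq)
      (use g in \<open>simp_all add: field_simps power2_eq_square\<close>)
qed

lemma pos_descartes_strip: "g > 0 \<Longrightarrow> pos_descartes (strip v g p q)"
  by (simp add: strip_def pos_descartes_hstrip pos_descartes_vstrip)

lemma W_mat_strip: "g > 0 \<Longrightarrow> W_mat (strip v g p q) = strip_mat v g p q"
  by (cases v)
    (simp_all add: strip_def strip_mat_def vec_eq_iff forall_4 hstrip_nth vstrip_nth hstrip_mat_def
      vstrip_mat_def cmod_mult_self field_simps power2_eq_square)

lemma cc_row_eq_aug_row:
  "cc_row C $ 1 = aug_row C $ 2" "cc_row C $ 2 = aug_row C $ 3" "cc_row C $ 3 = aug_row C $ 4"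
  by (cases C; simp add: Let_def)+

lemma oc_curv_eq_aug_row: "oc_curv C = aug_row C $ 2"
  by (cases C) (simp_all add: Let_def)

lemma strongly_integral_iff:
  "strongly_integral D \<longleftrightarrow> (\<forall>i. W_mat D $ i $ 2 \<in> \<int> \<and> W_mat D $ i $ 3 \<in> \<int> \<and> W_mat D $ i $ 4 \<in> \<int>)"
  unfolding strongly_integral_def M_mat_def by (simp add: forall_3 cc_row_eq_aug_row)

lemma divisor_eq_Gcd: "divisor D = Gcd (range (\<lambda>i. \<lfloor>W_mat D $ i $ 2\<rfloor>))"
  unfolding divisor_def oc_curv_eq_aug_row by simp

lemma oc_reverse_oc_reverse [simp]: "oc_reverse (oc_reverse C) = C"
  by (cases C) simp_all

lemma oc_boundary_oc_reverse [simp]: "oc_boundary (oc_reverse C) = oc_boundary C"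
proof (cases C)
  case (OLine n d)
  have "Re (z * cnj (- n)) = - d \<longleftrightarrow> Re (z * cnj n) = d" for z by auto
  then show ?thesis using OLine by simp
qed simp

lemma wf_oc_oc_reverse [simp]: "wf_oc (oc_reverse C) = wf_oc C"
  by (cases C) simp_all

lemma pos_descartes_comp: "pos_descartes D \<Longrightarrow> bij \<sigma> \<Longrightarrow> pos_descartes (D \<circ> \<sigma>)"
  unfolding pos_descartes_def by (simp add: bij_is_inj inj_eq)

lemma oo_descartes_comp: "oo_descartes D \<Longrightarrow> bij \<sigma> \<Longrightarrow> oo_descartes (D \<circ> \<sigma>)"
  unfolding oo_descartes_def using pos_descartes_comp by (metis comp_assoc)

lemma oo_descartes_oc_reverse_iff [simp]: "oo_descartes (oc_reverse \<circ> D) \<longleftrightarrow> oo_descartes D"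
proof -
  have "oc_reverse \<circ> (oc_reverse \<circ> D) = D" by (simp add: fun_eq_iff)
  then show ?thesis unfolding oo_descartes_def by metis
qed

lemma W_mat_comp: "W_mat (D \<circ> \<sigma>) = row_permute \<sigma> (W_mat D)"
  by (simp add: vec_eq_iff)

lemma superA_orbit_iff:
  "D \<in> superA_orbit R \<longleftrightarrow> oo_descartes D \<and> superA_equiv (W_mat R) (W_mat D)"
  unfolding superA_orbit_def superA_equiv_def by (auto dest: sym)

lemma superA_orbit_self: "oo_descartes R \<Longrightarrow> R \<in> superA_orbit R"
  using superA_orbit_iff superA_equiv_refl by blast

lemma superA_orbit_eq:
  assumes "D \<in> superA_orbit R"
  shows "superA_orbit D = superA_orbit R"
proof (intro set_eqI iffI)
  have RD: "superA_equiv (W_mat R) (W_mat D)" using assms superA_orbit_iff by blast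
  fix X
  show "X \<in> superA_orbit D \<Longrightarrow> X \<in> superA_orbit R"
    unfolding superA_orbit_iff using superA_equiv_trans[OF RD] by blast
  show "X \<in> superA_orbit R \<Longrightarrow> X \<in> superA_orbit D"
    unfolding superA_orbit_iff using superA_equiv_trans[OF superA_equiv_sym[OF RD]] by blast
qed

lemma superA_orbit_comp:
  "D \<in> superA_orbit R \<Longrightarrow> bij \<sigma> \<Longrightarrow> D \<circ> \<sigma> \<in> superA_orbit (R \<circ> \<sigma>)"
  unfolding superA_orbit_iff W_mat_comp using oo_descartes_comp superA_equiv_row_permute by blast

lemma superA_orbit_oc_reverse:
  "D \<in> superA_orbit R \<Longrightarrow> oc_reverse \<circ> D \<in> superA_orbit (oc_reverse \<circ> R)"
  unfolding superA_orbit_iff W_mat_oc_reverse using superA_equiv_uminus by simp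

lemma super_packing_subset_comp:
  assumes "bij \<sigma>"
  shows "super_packing R \<subseteq> super_packing (R \<circ> \<sigma>)"
proof
  fix P assume "P \<in> super_packing R"
  then obtain D i where D: "D \<in> superA_orbit R" "P = oc_boundary (D i)"
    unfolding super_packing_def by blast
  have "D \<circ> \<sigma> \<in> superA_orbit (R \<circ> \<sigma>)" using superA_orbit_comp[OF D(1) assms] .
  moreover have "P = oc_boundary ((D \<circ> \<sigma>) (inv \<sigma> i))"
    using D(2) assms by (simp add: bij_is_surj surj_f_inv_f)
  ultimately show "P \<in> super_packing (R \<circ> \<sigma>)" unfolding super_packing_def by blast
qed

lemma super_packing_comp: "bij \<sigma> \<Longrightarrow> super_packing (R \<circ> \<sigma>) = super_packing R"
proof
  assume "bij \<sigma>"
  then have "super_packing (R \<circ> \<sigma>) \<subseteq> super_packing (R \<circ> \<sigma> \<circ> inv \<sigma>)"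
    by (intro super_packing_subset_comp bij_imp_bij_inv)
  also have "R \<circ> \<sigma> \<circ> inv \<sigma> = R"
    using \<open>bij \<sigma>\<close> by (simp add: fun_eq_iff bij_is_surj surj_f_inv_f)
  finally show "super_packing (R \<circ> \<sigma>) \<subseteq> super_packing R" .
qed (rule super_packing_subset_comp)

lemma super_packing_subset_oc_reverse: "super_packing R \<subseteq> super_packing (oc_reverse \<circ> R)"
proof
  fix P assume "P \<in> super_packing R"
  then obtain D i where D: "D \<in> superA_orbit R" "P = oc_boundary (D i)"
    unfolding super_packing_def by blast
  have "oc_reverse \<circ> D \<in> superA_orbit (oc_reverse \<circ> R)" using superA_orbit_oc_reverse[OF D(1)] .
  moreover have "P = oc_boundary ((oc_reverse \<circ> D) i)" using D(2) by simp
  ultimately show "P \<in> super_packing (oc_reverse \<circ> R)" unfolding super_packing_def by blast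
qed

lemma super_packing_oc_reverse: "super_packing (oc_reverse \<circ> R) = super_packing R"
proof
  have "super_packing (oc_reverse \<circ> R) \<subseteq> super_packing (oc_reverse \<circ> (oc_reverse \<circ> R))"
    by (rule super_packing_subset_oc_reverse)
  also have "oc_reverse \<circ> (oc_reverse \<circ> R) = R" by (simp add: fun_eq_iff)
  finally show "super_packing (oc_reverse \<circ> R) \<subseteq> super_packing R" .
qed (rule super_packing_subset_oc_reverse)

lemma super_packing_orbit: "D \<in> superA_orbit R \<Longrightarrow> super_packing D = super_packing R"
  unfolding super_packing_def using superA_orbit_eq by simp

lemma Gcd_range_eqI:
  fixes b b' :: "'i \<Rightarrow> int"
  assumes "\<And>h. (\<forall>i. h dvd b i) \<longleftrightarrow> (\<forall>i. h dvd b' i)"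
  shows "Gcd (range b) = Gcd (range b')"
proof (rule zdvd_antisym_nonneg)
  show "Gcd (range b) dvd Gcd (range b')"
    using assms[of "Gcd (range b)"] by (simp add: dvd_Gcd_iff)
  show "Gcd (range b') dvd Gcd (range b)"
    using assms[of "Gcd (range b')"] by (simp add: dvd_Gcd_iff)
qed simp_all

lemma of_int_eq_mult_iff_dvd: "(\<exists>k::int. (of_int m :: real) = of_int h * of_int k) \<longleftrightarrow> h dvd m"
  by (auto simp: dvd_def simp flip: of_int_mult)

lemma vec_dvd_iff_dvd_floor:
  assumes "\<forall>i. x$i \<in> \<int>"
  shows "vec_dvd h x \<longleftrightarrow> (\<forall>i. h dvd \<lfloor>x$i\<rfloor>)"
proof -
  define m where "m i = \<lfloor>x$i\<rfloor>" for i
  have "x$i = of_int (m i)" for i using assms unfolding m_def by (auto elim!: Ints_cases)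
  then show ?thesis unfolding vec_dvd_def m_def[symmetric] by (simp add: of_int_eq_mult_iff_dvd)
qed

lemma vec_dvd_uminus [simp]: "vec_dvd h (- x) \<longleftrightarrow> vec_dvd h x"
proof -
  have "(\<exists>k::int. - y = of_int h * of_int k) \<longleftrightarrow> (\<exists>k::int. y = of_int h * of_int k)" for y :: real
  proof
    assume "\<exists>k::int. - y = of_int h * of_int k"
    then obtain k :: int where "- y = of_int h * of_int k" by blast
    then have "y = of_int h * of_int (- k)" by simp
    then show "\<exists>k::int. y = of_int h * of_int k" by blast
  next
    assume "\<exists>k::int. y = of_int h * of_int k"
    then obtain k :: int where "y = of_int h * of_int k" by blast
    then have "- y = of_int h * of_int (- k)" by simp
    then show "\<exists>k::int. - y = of_int h * of_int k" by blast
  qed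
  then show ?thesis unfolding vec_dvd_def by simp
qed

lemma curvatures_uminus [simp]: "curvatures (- W) = - curvatures W"
  by (simp add: vec_eq_iff)

lemma divisor_eq_iff_vec_dvd:
  assumes "strongly_integral D" "g \<ge> 1"
  shows "divisor D = g \<longleftrightarrow>
    vec_dvd g (curvatures (W_mat D)) \<and> (\<forall>h. vec_dvd h (curvatures (W_mat D)) \<longrightarrow> h dvd g)"
proof -
  have ints: "\<forall>i. curvatures (W_mat D) $ i \<in> \<int>" using assms(1) strongly_integral_iff by simp
  have "Gcd (range (\<lambda>i. \<lfloor>W_mat D $ i $ 2\<rfloor>)) = g \<longleftrightarrow>
      (\<forall>i. g dvd \<lfloor>W_mat D $ i $ 2\<rfloor>) \<and> (\<forall>h. (\<forall>i. h dvd \<lfloor>W_mat D $ i $ 2\<rfloor>) \<longrightarrow> h dvd g)"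
    (is "Gcd ?S = g \<longleftrightarrow> ?rhs")
  proof
    assume gS: "Gcd ?S = g"
    have "g dvd \<lfloor>W_mat D $ i $ 2\<rfloor>" for i unfolding gS[symmetric] by (rule Gcd_dvd) simp
    moreover have "h dvd g" if "\<forall>i. h dvd \<lfloor>W_mat D $ i $ 2\<rfloor>" for h
      unfolding gS[symmetric] using that by (auto intro: Gcd_greatest)
    ultimately show ?rhs by blast
  next
    assume rhs: ?rhs
    have "Gcd ?S dvd g" using rhs Gcd_dvd[of _ ?S] by blast
    moreover have "g dvd Gcd ?S" using rhs by (auto intro: Gcd_greatest)
    ultimately show "Gcd ?S = g" using assms(2) by (intro zdvd_antisym_nonneg) simp_all
  qed
  then show ?thesis
    unfolding divisor_eq_Gcd vec_dvd_iff_dvd_floor[OF ints] by simp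
qed

lemma superA_equiv_integral:
  assumes "superA_equiv X Y" "\<forall>i. X$i$j \<in> \<int>"
  shows "Y$i$j \<in> \<int>"
proof -
  obtain U where "U \<in> superA" "U ** X = Y" using assms unfolding superA_equiv_def by blast
  then show ?thesis
    using integral_id_mod2_mult_Ints[OF superA_integral_id_mod2] assms(2) by blast
qed

lemma superA_equiv_vec_dvd_curvatures:
  assumes "superA_equiv X Y"
  shows "vec_dvd h (curvatures Y) \<longleftrightarrow> vec_dvd h (curvatures X)"
proof -
  obtain U where "U \<in> superA" "U ** X = Y" using assms unfolding superA_equiv_def by blast
  then show ?thesis using superA_vec_dvd_iff[of U h "curvatures X"] curvatures_mult[of U X] by simp
qed

lemma superA_orbit_strongly_integral_divisor:
  assumes "D \<in> superA_orbit R" "strongly_integral R"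
  shows "strongly_integral D \<and> divisor D = divisor R"
proof -
  have eq: "superA_equiv (W_mat R) (W_mat D)" using assms(1) superA_orbit_iff by blast
  have RI: "\<forall>i. W_mat R $ i $ 2 \<in> \<int>" "\<forall>i. W_mat R $ i $ 3 \<in> \<int>" "\<forall>i. W_mat R $ i $ 4 \<in> \<int>"
    using assms(2) unfolding strongly_integral_iff by auto
  then have SI: "strongly_integral D"
    unfolding strongly_integral_iff
    using superA_equiv_integral[OF eq RI(1)] superA_equiv_integral[OF eq RI(2)]
      superA_equiv_integral[OF eq RI(3)] by blast
  have DI: "\<forall>i. curvatures (W_mat D) $ i \<in> \<int>" and RI2: "\<forall>i. curvatures (W_mat R) $ i \<in> \<int>"
    using SI RI(1) unfolding strongly_integral_iff by simp_all
  have "(\<forall>i. h dvd \<lfloor>W_mat D $ i $ 2\<rfloor>) \<longleftrightarrow> (\<forall>i. h dvd \<lfloor>W_mat R $ i $ 2\<rfloor>)" for h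
    using superA_equiv_vec_dvd_curvatures[OF eq, of h]
    unfolding vec_dvd_iff_dvd_floor[OF DI] vec_dvd_iff_dvd_floor[OF RI2] by simp
  then have "divisor D = divisor R" unfolding divisor_eq_Gcd by (rule Gcd_range_eqI)
  with SI show ?thesis ..
qed

definition base_config :: "int \<Rightarrow> bool \<times> bool \<times> bool \<Rightarrow> config" where
  "base_config g c = (case c of (v, a, b) \<Rightarrow> strip v (of_int g) (of_bool a) (of_bool b))"

definition base_mat :: "int \<Rightarrow> bool \<times> bool \<times> bool \<Rightarrow> real^4^4" where
  "base_mat g c = (case c of (v, a, b) \<Rightarrow> strip_mat v (of_int g) (of_bool a) (of_bool b))"

definition rep_config :: "int \<Rightarrow> bool \<times> bool \<times> bool \<Rightarrow> (4 \<Rightarrow> 4) \<Rightarrow> bool \<Rightarrow> config" where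
  "rep_config g c \<sigma> e = (if e then base_config g c \<circ> \<sigma> else oc_reverse \<circ> (base_config g c \<circ> \<sigma>))"

lemma W_mat_base_config: "g \<ge> 1 \<Longrightarrow> W_mat (base_config g c) = base_mat g c"
  unfolding base_config_def base_mat_def by (cases c) (simp add: W_mat_strip)

lemma pos_descartes_base_config: "g \<ge> 1 \<Longrightarrow> pos_descartes (base_config g c)"
  unfolding base_config_def by (cases c) (simp add: pos_descartes_strip)

lemma W_mat_rep_config:
  "g \<ge> 1 \<Longrightarrow> W_mat (rep_config g c \<sigma> e)
     = (if e then row_permute \<sigma> (base_mat g c) else - row_permute \<sigma> (base_mat g c))"
  unfolding rep_config_def by (simp add: W_mat_oc_reverse W_mat_comp W_mat_base_config)

lemma oo_descartes_rep_config:
  assumes "g \<ge> 1" "bij \<sigma>"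
  shows "oo_descartes (rep_config g c \<sigma> e)"
proof -
  have "oo_descartes (base_config g c \<circ> \<sigma>)"
    using pos_descartes_comp[OF pos_descartes_base_config[OF assms(1)] assms(2)]
    unfolding oo_descartes_def by blast
  then show ?thesis unfolding rep_config_def by simp
qed

lemma super_packing_rep_config:
  "bij \<sigma> \<Longrightarrow> super_packing (rep_config g c \<sigma> e) = super_packing (base_config g c)"
  unfolding rep_config_def by (simp add: super_packing_comp super_packing_oc_reverse)

lemma base_mat_nth:
  "base_mat g (v, a, b) $ m $ 2 = (if m = 1 \<or> m = 2 then 0 else of_int g)"
  "base_mat g (v, a, b) $ m $ 3 = (if m = 1 then of_bool v else if m = 2 then - of_bool v
      else if m = 3 \<or> v then of_bool a else of_bool a - 2)"
  "base_mat g (v, a, b) $ m $ 4 = (if m = 1 then of_bool (\<not> v) else if m = 2 then - of_bool (\<not> v)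
      else if m = 3 \<or> \<not> v then of_bool b else of_bool b - 2)"
  using exhaust_4[of m]
  by (cases v; elim disjE; simp add: base_mat_def strip_mat_def hstrip_mat_def vstrip_mat_def)+

lemma strongly_integral_rep_config: "g \<ge> 1 \<Longrightarrow> strongly_integral (rep_config g c \<sigma> e)"
  unfolding strongly_integral_iff W_mat_rep_config
  by (cases c) (auto simp: base_mat_nth)

lemma divisor_rep_config:
  assumes g: "g \<ge> 1" and \<sigma>: "bij \<sigma>"
  shows "divisor (rep_config g c \<sigma> e) = g"
proof -
  obtain v a b where c: "c = (v, a, b)" by (cases c)
  define s :: int where "s = (if e then 1 else -1)"
  define f where "f m = s * (if m = 1 \<or> m = 2 then 0 else g)" for m :: 4
  have eq: "(\<lambda>i. \<lfloor>W_mat (rep_config g c \<sigma> e) $ i $ 2\<rfloor>) = f \<circ> \<sigma>"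
    unfolding W_mat_rep_config[OF g] c s_def f_def by (auto simp: fun_eq_iff base_mat_nth)
  have "range (f \<circ> \<sigma>) = f ` range \<sigma>" by (simp only: image_comp)
  also have "range \<sigma> = UNIV" using bij_is_surj[OF \<sigma>] .
  finally have "range (f \<circ> \<sigma>) = range f" .
  then have "range (\<lambda>i. \<lfloor>W_mat (rep_config g c \<sigma> e) $ i $ 2\<rfloor>) = range f"
    by (simp only: eq)
  also have "\<dots> = {f 1, f 2, f 3, f 4}" by (simp add: UNIV_4)
  also have "\<dots> = {0, s * g}" by (simp add: f_def)
  also have "Gcd \<dots> = g" using g by (cases e) (simp_all add: s_def)
  finally show ?thesis unfolding divisor_eq_Gcd .
qed

lemma superA_orbit_rep_config:
  assumes "g \<ge> 1" "bij \<sigma>" "D \<in> superA_orbit (rep_config g c \<sigma> e)"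
  shows "oo_descartes D \<and> strongly_integral D \<and> divisor D = g"
proof -
  have "strongly_integral D \<and> divisor D = divisor (rep_config g c \<sigma> e)"
    using superA_orbit_strongly_integral_divisor[OF assms(3) strongly_integral_rep_config[OF assms(1)]] .
  then show ?thesis
    using assms(3) superA_orbit_iff divisor_rep_config[OF assms(1,2)] by simp
qed

lemma superA_orbit_rep_config_exists:
  assumes g: "g \<ge> 1" and D: "oo_descartes D" "strongly_integral D" "divisor D = g"
  shows "\<exists>c \<sigma> e. bij \<sigma> \<and> D \<in> superA_orbit (rep_config g c \<sigma> e)"
proof -
  define W where "W = W_mat D"
  have rel: "descartes_rel W" unfolding W_def using oo_descartes_descartes_rel[OF D(1)] .
  have ints: "\<forall>i. W$i$2 \<in> \<int> \<and> W$i$3 \<in> \<int> \<and> W$i$4 \<in> \<int>"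
    using D(2) unfolding W_def strongly_integral_iff .
  have dvd: "vec_dvd g (curvatures W)" "\<forall>h. vec_dvd h (curvatures W) \<longrightarrow> h dvd g"
    using divisor_eq_iff_vec_dvd[OF D(2) g] D(3) unfolding W_def by blast+
  have reduce: "\<exists>c \<sigma>. bij \<sigma> \<and> superA_equiv X (row_permute \<sigma> (base_mat g c))"
    if X: "X = W \<or> X = - W" and pos: "entry_sum (curvatures X) > 0" for X
  proof -
    have "descartes_rel X" "\<forall>i. X$i$2 \<in> \<int> \<and> X$i$3 \<in> \<int> \<and> X$i$4 \<in> \<int>"
      "vec_dvd g (curvatures X)" "\<forall>h. vec_dvd h (curvatures X) \<longrightarrow> h dvd g"
      using X rel ints dvd descartes_rel_uminus by auto
    then obtain \<sigma> v a b where "bij \<sigma>"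
      "superA_equiv X (row_permute \<sigma> (strip_mat v (of_int g) (of_bool a) (of_bool b)))"
      using superA_equiv_strip_mat g pos by blast
    then show ?thesis unfolding base_mat_def by (intro exI[of _ "(v, a, b)"]) auto
  qed
  have "entry_sum (curvatures W) \<noteq> 0"
  proof
    assume "entry_sum (curvatures W) = 0"
    then have sq: "(W$1$2)\<^sup>2 + (W$2$2)\<^sup>2 + (W$3$2)\<^sup>2 + (W$4$2)\<^sup>2 = 0"
      using descartes_rel_curvatures[OF rel] unfolding descartes_vec_def by simp
    have "(W$1$2)\<^sup>2 = 0" "(W$2$2)\<^sup>2 = 0" "(W$3$2)\<^sup>2 = 0" "(W$4$2)\<^sup>2 = 0"
      using sq zero_le_power2[of "W$1$2"] zero_le_power2[of "W$2$2"] zero_le_power2[of "W$3$2"]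
        zero_le_power2[of "W$4$2"] by linarith+
    then have "curvatures W = 0" by (simp add: vec_eq_iff forall_4)
    then have "vec_dvd 0 (curvatures W)" by (simp add: vec_dvd_def)
    then show False using dvd(2) g by auto
  qed
  then have "entry_sum (curvatures W) > 0 \<or> entry_sum (curvatures (- W)) > 0"
    by (auto simp: entry_sum_def)
  then obtain c \<sigma> e where "bij \<sigma>"
    "superA_equiv (if e then W else - W) (row_permute \<sigma> (base_mat g c))"
    using reduce by (metis (full_types))
  then have "superA_equiv (W_mat (rep_config g c \<sigma> e)) W"
    using superA_equiv_uminus superA_equiv_sym unfolding W_mat_rep_config[OF g]
    by (cases e) fastforce+
  then show ?thesis
    using \<open>bij \<sigma>\<close> D(1) superA_orbit_iff unfolding W_def by blast
qed

lemma sphere_eq_sphere_imp: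
  fixes c c' :: complex
  assumes r: "r > 0" and eq: "sphere c r = sphere c' r'"
  shows "c = c' \<and> r = r'"
proof -
  have on: "dist c' z = r'" if "dist c z = r" for z using eq that by (metis mem_sphere)
  define w where "w = c - c'"
  have d: "dist c' (c + of_real r) = r'" "dist c' (c - of_real r) = r'"
    "dist c' (c + \<i> * of_real r) = r'" "dist c' (c - \<i> * of_real r) = r'"
    by (rule on, use r in \<open>simp add: dist_norm norm_mult\<close>)+
  have s: "(Re w + r)\<^sup>2 + (Im w)\<^sup>2 = r'\<^sup>2" "(Re w - r)\<^sup>2 + (Im w)\<^sup>2 = r'\<^sup>2"
    "(Re w)\<^sup>2 + (Im w + r)\<^sup>2 = r'\<^sup>2" "(Re w)\<^sup>2 + (Im w - r)\<^sup>2 = r'\<^sup>2"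
    using d(1) dist_complex_sq[of c' "c + of_real r"] d(2) dist_complex_sq[of c' "c - of_real r"]
      d(3) dist_complex_sq[of c' "c + \<i> * of_real r"] d(4) dist_complex_sq[of c' "c - \<i> * of_real r"]
    unfolding w_def by (simp_all add: power2_eq_square algebra_simps)
  have "(Re w + r)\<^sup>2 - (Re w - r)\<^sup>2 = 4 * r * Re w" "(Im w + r)\<^sup>2 - (Im w - r)\<^sup>2 = 4 * r * Im w"
    by (simp_all add: power2_eq_square algebra_simps)
  then have "4 * r * Re w = 0" "4 * r * Im w = 0" using s by linarith+
  then have "Re w = 0" "Im w = 0" using r by simp_all
  moreover from this have "r\<^sup>2 = r'\<^sup>2" using s(1) by simp
  moreover have "r' \<ge> 0" using d(1) zero_le_dist by metis
  ultimately show ?thesis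
    using r unfolding w_def by (simp add: complex_eq_iff power2_eq_iff_nonneg)
qed

lemma line_eq_line_imp:
  assumes n: "cmod n = 1" "cmod n' = 1" and eq: "{z. Re (z * cnj n) = d} = {z. Re (z * cnj n') = d'}"
  shows "(n' = n \<and> d' = d) \<or> (n' = - n \<and> d' = - d)"
proof -
  have on: "Re (z * cnj n') = d'" if "Re (z * cnj n) = d" for z using eq that by blast
  define a b a' b' where "a = Re n" and "b = Im n" and "a' = Re n'" and "b' = Im n'"
  have u: "a\<^sup>2 + b\<^sup>2 = 1" "a'\<^sup>2 + b'\<^sup>2 = 1"
    using n cmod_power2[of n] cmod_power2[of n'] unfolding a_def b_def a'_def b'_def by simp_all
  have nn: "Re n * Re n + Im n * Im n = 1" using u unfolding a_def b_def by (simp add: power2_eq_square)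
  have "Re ((of_real d * n) * cnj n) = d * (Re n * Re n + Im n * Im n)"
    "Re ((of_real d * n + \<i> * n) * cnj n) = d * (Re n * Re n + Im n * Im n)"
    by (simp_all add: algebra_simps)
  then have z: "Re ((of_real d * n) * cnj n) = d" "Re ((of_real d * n + \<i> * n) * cnj n) = d"
    using nn by simp_all
  have e1: "d * (a * a' + b * b') = d'"
    using on[OF z(1)] unfolding a_def b_def a'_def b'_def by (simp add: algebra_simps)
  have e2: "d * (a * a' + b * b') + (a * b' - b * a') = d'"
    using on[OF z(2)] unfolding a_def b_def a'_def b'_def by (simp add: algebra_simps)
  from e1 e2 have det: "a * b' - b * a' = 0" by simp
  have "(a * a' + b * b')\<^sup>2 + (a * b' - b * a')\<^sup>2 = (a\<^sup>2 + b\<^sup>2) * (a'\<^sup>2 + b'\<^sup>2)"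
    by (simp add: power2_eq_square algebra_simps)
  then have "(a * a' + b * b')\<^sup>2 = 1\<^sup>2" using u det by simp
  then have pm: "a * a' + b * b' = 1 \<or> a * a' + b * b' = -1" using power2_eq_iff by blast
  have "(a - t * a')\<^sup>2 + (b - t * b')\<^sup>2
      = (a\<^sup>2 + b\<^sup>2) + t * t * (a'\<^sup>2 + b'\<^sup>2) - 2 * t * (a * a' + b * b')" for t
    by (simp add: power2_eq_square algebra_simps)
  then have sq: "(a - t * a')\<^sup>2 + (b - t * b')\<^sup>2 = 1 + t * t - 2 * t * (a * a' + b * b')" for t
    using u by simp
  from pm show ?thesis
  proof
    assume p: "a * a' + b * b' = 1"
    then have "(a - 1 * a')\<^sup>2 + (b - 1 * b')\<^sup>2 = 0" using sq[of 1] by simp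
    then have "n' = n" unfolding a_def b_def a'_def b'_def by (simp add: complex_eq_iff)
    moreover have "d' = d" using e1 p by simp
    ultimately show ?thesis by simp
  next
    assume p: "a * a' + b * b' = -1"
    then have "(a - (-1) * a')\<^sup>2 + (b - (-1) * b')\<^sup>2 = 0" using sq[of "-1"] by simp
    then have "n' = - n"
      unfolding a_def b_def a'_def b'_def by (simp add: complex_eq_iff eq_neg_iff_add_eq_0)
    moreover have "d' = - d" using e1 p by simp
    ultimately show ?thesis by simp
  qed
qed

lemma oc_boundary_eq_imp:
  assumes "wf_oc A" "wf_oc B" "oc_boundary A = oc_boundary B"
  shows "B = A \<or> B = oc_reverse A"
proof (cases A)
  case A: (OCirc c r b)
  show ?thesis
  proof (cases B)
    case (OCirc c' r' b')
    then have "sphere c r = sphere c' r'"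
      using assms(3) A by (simp add: inj_image_eq_iff)
    moreover have "r > 0" using assms(1) A by simp
    ultimately have "c' = c \<and> r' = r" using sphere_eq_sphere_imp by metis
    then show ?thesis using A OCirc by (cases b; cases b') auto
  next
    case (OLine n d)
    then have "None \<in> oc_boundary B" by simp
    then show ?thesis using assms(3) A by auto
  qed
next
  case A: (OLine n d)
  show ?thesis
  proof (cases B)
    case (OCirc c' r' b')
    have "None \<in> oc_boundary A" using A by simp
    then show ?thesis using assms(3) OCirc by auto
  next
    case (OLine n' d')
    then have "insert None (Some ` {z. Re (z * cnj n) = d}) = insert None (Some ` {z. Re (z * cnj n') = d'})"
      using assms(3) A by simp
    then have "Some ` {z. Re (z * cnj n) = d} = Some ` {z. Re (z * cnj n') = d'}"
      by (auto simp: set_eq_iff)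
    then have "{z. Re (z * cnj n) = d} = {z. Re (z * cnj n') = d'}"
      by (simp add: inj_image_eq_iff)
    then show ?thesis using line_eq_line_imp assms(1,2) A OLine by auto
  qed
qed

definition parity_class :: "real \<Rightarrow> real^4 \<Rightarrow> bool \<times> bool \<times> bool" where
  "parity_class g x = (cong_mod2 (x$2 / g) 1, cong_mod2 (x$3) 1, cong_mod2 (x$4) 1)"

lemma cong_mod2_1_cong: "cong_mod2 x y \<Longrightarrow> cong_mod2 x 1 \<longleftrightarrow> cong_mod2 y 1"
  using cong_mod2_sym cong_mod2_trans by blast

lemma parity_class_uminus:
  "x$2 / g \<in> \<int> \<Longrightarrow> x$3 \<in> \<int> \<Longrightarrow> x$4 \<in> \<int> \<Longrightarrow> parity_class g (- x) = parity_class g x"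
  unfolding parity_class_def using cong_mod2_1_cong[OF cong_mod2_uminus] by simp

lemma superA_parity_class:
  assumes U: "U \<in> superA" and X: "\<forall>k. X$k$2 / g \<in> \<int> \<and> X$k$3 \<in> \<int> \<and> X$k$4 \<in> \<int>"
  shows "parity_class g ((U ** X) $ i) = parity_class g (X $ i)"
proof -
  have cong: "cong_mod2 ((U ** X)$i$j * t) (X$i$j * t)" if "\<forall>k. X$k$j * t \<in> \<int>" for j t
  proof -
    have "(U ** X)$i$j * t = (U *v (\<chi> k. X$k$j * t))$i"
      by (simp add: matrix_matrix_mult_def matrix_vector_mult_def sum_distrib_right mult.assoc)
    then show ?thesis
      using integral_id_mod2_mv_cong[OF superA_integral_id_mod2[OF U], of "\<chi> k. X$k$j * t" i] that
      by simp
  qed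
  have "cong_mod2 ((U ** X)$i$2 / g) (X$i$2 / g)" "cong_mod2 ((U ** X)$i$3) (X$i$3)"
    "cong_mod2 ((U ** X)$i$4) (X$i$4)"
    using cong[of 2 "1 / g"] cong[of 3 1] cong[of 4 1] X by simp_all
  then show ?thesis unfolding parity_class_def using cong_mod2_1_cong by simp
qed

lemma cong_mod2_of_bool_1: "cong_mod2 (of_bool a) 1 \<longleftrightarrow> a"
  using cong_mod2_of_bool_iff[of a True] by simp

lemma base_mat_Ints:
  "g \<ge> 1 \<Longrightarrow> base_mat g c $ m $ 2 / of_int g \<in> \<int> \<and> base_mat g c $ m $ 3 \<in> \<int> \<and> base_mat g c $ m $ 4 \<in> \<int>"
  by (cases c) (simp add: base_mat_nth)

lemma parity_class_base_mat:
  assumes "g \<ge> 1"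
  shows "parity_class (of_int g) (base_mat g (v, a, b) $ m)
    = (if m = 1 \<or> m = 2 then (False, v, \<not> v) else (True, a, b))"
proof -
  have "cong_mod2 (- of_bool v) 1 \<longleftrightarrow> v" "cong_mod2 (of_bool a - 2) 1 \<longleftrightarrow> a" for v a
    using cong_mod2_1_cong[OF cong_mod2_uminus[of "of_bool v"]]
      cong_mod2_1_cong[OF cong_mod2_minus_even[of 1 "of_bool a"]] cong_mod2_of_bool_1 by simp_all
  moreover have "cong_mod2 1 1" "\<not> cong_mod2 0 1"
    using cong_mod2_of_bool_1[of True] cong_mod2_of_bool_1[of False] by simp_all
  ultimately show ?thesis
    using assms unfolding parity_class_def by (simp add: base_mat_nth cong_mod2_of_bool_1)
qed

lemma parity_class_rep_config:
  assumes "g \<ge> 1"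
  shows "parity_class (of_int g) (W_mat (rep_config g c \<sigma> e) $ i) = parity_class (of_int g) (base_mat g c $ \<sigma> i)"
  using base_mat_Ints[OF assms, of c "\<sigma> i"] parity_class_uminus
  unfolding W_mat_rep_config[OF assms] by (simp del: W_mat_nth)

lemma parity_class_base_mat_eq:
  assumes "g \<ge> 1"
    and "parity_class (of_int g) (base_mat g c $ m) = parity_class (of_int g) (base_mat g c' $ m')"
  shows "(m = 1 \<or> m = 2 \<longleftrightarrow> m' = 1 \<or> m' = 2) \<and> (m = 1 \<or> m = 2 \<longrightarrow> fst c = fst c')
    \<and> (\<not> (m = 1 \<or> m = 2) \<longrightarrow> snd c = snd c')"
  using assms parity_class_base_mat[OF assms(1)] by (cases c; cases c') (auto split: if_splits)

lemma W_mat_rep_config_Ints: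
  assumes "g \<ge> 1"
  shows "\<forall>k. W_mat (rep_config g c \<sigma> e) $ k $ 2 / of_int g \<in> \<int>
    \<and> W_mat (rep_config g c \<sigma> e) $ k $ 3 \<in> \<int> \<and> W_mat (rep_config g c \<sigma> e) $ k $ 4 \<in> \<int>"
  using base_mat_Ints[OF assms] unfolding W_mat_rep_config[OF assms] by (simp del: W_mat_nth)

lemma superA_rep_config_class_eq:
  assumes g: "g \<ge> 1" and \<sigma>: "bij \<sigma>" and U: "U \<in> superA"
    and eq: "U ** W_mat (rep_config g c \<sigma> e) = W_mat (rep_config g c' \<sigma>' e')"
  shows "c = c'"
proof -
  have par: "parity_class (of_int g) (base_mat g c $ \<sigma> i) = parity_class (of_int g) (base_mat g c' $ \<sigma>' i)" for i
  proof -
    have "parity_class (of_int g) ((U ** W_mat (rep_config g c \<sigma> e)) $ i)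
        = parity_class (of_int g) (W_mat (rep_config g c \<sigma> e) $ i)"
      by (rule superA_parity_class[OF U W_mat_rep_config_Ints[OF g]])
    then show ?thesis unfolding eq parity_class_rep_config[OF g] by simp
  qed
  have "\<sigma> (inv \<sigma> m) = m" for m using \<sigma> by (simp add: bij_is_surj surj_f_inv_f)
  then have "fst c = fst c'" "snd c = snd c'"
    using parity_class_base_mat_eq[OF g par[of "inv \<sigma> 1"]] parity_class_base_mat_eq[OF g par[of "inv \<sigma> 3"]]
    by simp_all
  then show ?thesis by (simp add: prod_eq_iff)
qed

lemma superA_signed_permutation_matrix:
  assumes U: "U \<in> superA" and t: "t = 1 \<or> t = -1"
    and U_eq: "\<And>i m. U$i$m = t * (if \<sigma>' i = \<sigma> m then 1 else 0)"
    and \<sigma>: "bij \<sigma>"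
  shows "\<sigma>' = \<sigma> \<and> t = 1"
proof -
  have "i = m" if "\<sigma>' i = \<sigma> m" for i m
  proof (rule ccontr)
    assume "i \<noteq> m"
    have "cong_mod2 (U$i$m) (mat 1 $ i $ m)"
      using superA_integral_id_mod2[OF U] unfolding integral_id_mod2_def by blast
    then have "cong_mod2 t 0" using U_eq[of i m] that \<open>i \<noteq> m\<close> by (simp add: mat_def)
    then show False
      using t half_notin_Ints Ints_minus[of "- 1 / 2 :: real"] by (auto simp: cong_mod2_def)
  qed
  then have \<sigma>\<sigma>': "\<sigma>' = \<sigma>" using \<sigma> by (metis bij_inv_eq_iff ext)
  moreover have "t = 1"
  proof (rule ccontr)
    assume "t \<noteq> 1"
    then have "U = - mat 1" using t U_eq \<sigma>\<sigma>' \<sigma> by (auto simp: vec_eq_iff mat_def bij_is_inj inj_eq)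
    moreover have "descartes_vec (vector [0, 0, 1, 1])" "entry_sum (vector [0, 0, 1, 1]) > 0"
      by (simp_all add: descartes_vec_def entry_sum_def)
    ultimately show False
      using superA_entry_sum_pos[OF U] by (fastforce simp: entry_sum_def matrix_vector_mult_nth4 mat_def)
  qed
  ultimately show ?thesis ..
qed

lemma row_permute_mult_left: "row_permute \<sigma> X ** Y = row_permute \<sigma> (X ** Y)"
  by (simp add: vec_eq_iff matrix_matrix_mult_def)

lemma matrix_mult_row_permute_mat_1_nth:
  assumes "bij \<sigma>"
  shows "(U ** row_permute \<sigma> (mat 1)) $ i $ \<sigma> m = (U :: 'a::semiring_1^'n^'n) $ i $ m"
proof -
  have "(U ** row_permute \<sigma> (mat 1)) $ i $ \<sigma> m = (\<Sum>k\<in>UNIV. U $ i $ k * (if k = m then 1 else 0))"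
    using assms by (simp add: matrix_matrix_mult_def mat_def bij_is_inj inj_eq)
  then show ?thesis by (simp add: if_distrib[of "\<lambda>x. _ * x"] cong: if_cong)
qed

text \<open>The base matrix is invertible, so the equation forces \<open>U\<close> to be a signed permutation
  matrix; reduction mod 2 and positivity of curvature sums leave only the identity.\<close>
lemma superA_rep_config_perm_sign_eq:
  assumes g: "g \<ge> 1" and \<sigma>: "bij \<sigma>" and U: "U \<in> superA"
    and eq: "U ** W_mat (rep_config g c \<sigma> e) = W_mat (rep_config g c \<sigma>' e')"
  shows "\<sigma>' = \<sigma> \<and> e = e'"
proof -
  let ?B = "base_mat g c"
  define E where "E \<tau> = (row_permute \<tau> (mat 1) :: real^4^4)" for \<tau>
  define t where "t = (if e = e' then 1 else -1 :: real)"
  obtain B' where B': "?B ** B' = mat 1"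
    using descartes_rel_right_inverse pos_descartes_descartes_rel[OF pos_descartes_base_config[OF g]]
    unfolding W_mat_base_config[OF g] by blast
  have EB: "row_permute \<tau> ?B ** B' = E \<tau>" for \<tau>
    unfolding E_def row_permute_mult_left B' ..
  have "U ** (if e then row_permute \<sigma> ?B else - row_permute \<sigma> ?B) ** B'
      = (if e' then row_permute \<sigma>' ?B else - row_permute \<sigma>' ?B) ** B'"
    using eq unfolding W_mat_rep_config[OF g] by simp
  then have "U ** (if e then E \<sigma> else - E \<sigma>) = (if e' then E \<sigma>' else - E \<sigma>')"
    by (cases e; cases e')
      (simp_all add: matrix_mul_assoc[symmetric] matrix_mult_uminus_left matrix_mult_uminus_right EB)
  then have UE: "U ** E \<sigma> = (if e = e' then E \<sigma>' else - E \<sigma>')"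
    by (cases e; cases e') (auto simp: matrix_mult_uminus_right minus_equation_iff)
  have Ueq: "U $ i $ m = t * (if \<sigma>' i = \<sigma> m then 1 else 0)" for i m
  proof -
    have "U $ i $ m = (U ** E \<sigma>) $ i $ \<sigma> m"
      unfolding E_def by (rule matrix_mult_row_permute_mat_1_nth[OF \<sigma>, symmetric])
    also have "\<dots> = (if e = e' then E \<sigma>' else - E \<sigma>') $ i $ \<sigma> m" by (simp only: UE)
    also have "\<dots> = t * (if \<sigma>' i = \<sigma> m then 1 else 0)"
      by (cases "e = e'") (simp_all add: t_def E_def mat_def)
    finally show ?thesis .
  qed
  have "t = 1 \<or> t = -1" unfolding t_def by simp
  from superA_signed_permutation_matrix[OF U this Ueq \<sigma>] show ?thesis
    unfolding t_def by (simp split: if_splits)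
qed

lemma oo_descartes_wf_oc: "oo_descartes D \<Longrightarrow> wf_oc (D i)"
  unfolding oo_descartes_def pos_descartes_def by (metis comp_apply wf_oc_oc_reverse)

text \<open>A line of the first configuration, or a circle if both share their circle parities, has a
  parity class that occurs in no configuration of the other orbit.\<close>
lemma super_packing_base_config_inj:
  assumes g: "g \<ge> 1" and ne: "c \<noteq> c'"
  shows "super_packing (base_config g c) \<noteq> super_packing (base_config g c')"
proof -
  define w :: 4 where "w = (if snd c = snd c' then 1 else 3)"
  have "oo_descartes (base_config g c)"
    using pos_descartes_base_config[OF g] unfolding oo_descartes_def by blast
  then have mem: "oc_boundary (base_config g c w) \<in> super_packing (base_config g c)"
    unfolding super_packing_def using superA_orbit_self by blast
  have "oc_boundary (base_config g c w) \<notin> super_packing (base_config g c')"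
  proof
    assume "oc_boundary (base_config g c w) \<in> super_packing (base_config g c')"
    then obtain D i where D: "D \<in> superA_orbit (base_config g c')"
      "oc_boundary (base_config g c w) = oc_boundary (D i)"
      unfolding super_packing_def by blast
    obtain U where U: "U \<in> superA" "U ** base_mat g c' = W_mat D"
      using D(1) unfolding superA_orbit_iff superA_equiv_def W_mat_base_config[OF g] by blast
    have "wf_oc (base_config g c w)"
      using pos_descartes_base_config[OF g] unfolding pos_descartes_def by blast
    moreover have "wf_oc (D i)"
      using D(1) oo_descartes_wf_oc unfolding superA_orbit_iff by blast
    ultimately have "D i = base_config g c w \<or> D i = oc_reverse (base_config g c w)"
      using oc_boundary_eq_imp D(2) by blast
    moreover have "base_mat g c $ w = aug_row (base_config g c w)"
      by (simp flip: W_mat_base_config[OF g])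
    ultimately have row: "W_mat D $ i = base_mat g c $ w \<or> W_mat D $ i = - base_mat g c $ w"
      by (auto simp: aug_row_oc_reverse)
    have "parity_class (of_int g) (- base_mat g c $ w) = parity_class (of_int g) (base_mat g c $ w)"
      using base_mat_Ints[OF g, of c w] by (intro parity_class_uminus) simp_all
    with row have pc: "parity_class (of_int g) (W_mat D $ i) = parity_class (of_int g) (base_mat g c $ w)"
      by (elim disjE) (simp_all only:)
    have "\<forall>k. base_mat g c' $ k $ 2 / of_int g \<in> \<int> \<and> base_mat g c' $ k $ 3 \<in> \<int>
        \<and> base_mat g c' $ k $ 4 \<in> \<int>"
      using base_mat_Ints[OF g] by blast
    from superA_parity_class[OF U(1) this, of i]
    have "parity_class (of_int g) (base_mat g c $ w) = parity_class (of_int g) (base_mat g c' $ i)"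
      unfolding U(2) pc .
    note P = parity_class_base_mat_eq[OF g this]
    show False
    proof (cases "snd c = snd c'")
      case True
      then have "w = 1" unfolding w_def by simp
      then have "fst c = fst c'" using P by simp
      then show False using True ne by (simp add: prod_eq_iff)
    next
      case False
      then have "w = 3" unfolding w_def by simp
      then show False using P False by simp
    qed
  qed
  then show ?thesis using mem by blast
qed

lemma superA_orbit_rep_config_inj:
  assumes g: "g \<ge> 1" and \<sigma>: "bij \<sigma>" "bij \<sigma>'"
    and eq: "superA_orbit (rep_config g c \<sigma> e) = superA_orbit (rep_config g c' \<sigma>' e')"
  shows "c = c' \<and> \<sigma> = \<sigma>' \<and> e = e'"
proof -
  have "rep_config g c' \<sigma>' e' \<in> superA_orbit (rep_config g c \<sigma> e)"
    unfolding eq using superA_orbit_self oo_descartes_rep_config[OF g \<sigma>(2)] by blast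
  then obtain U where U: "U \<in> superA" "U ** W_mat (rep_config g c \<sigma> e) = W_mat (rep_config g c' \<sigma>' e')"
    unfolding superA_orbit_iff superA_equiv_def by blast
  then have "c = c'" by (rule superA_rep_config_class_eq[OF g \<sigma>(1)])
  then show ?thesis using superA_rep_config_perm_sign_eq[OF g \<sigma>(1)] U by blast
qed

lemma permutes_UNIV_iff_bij: "\<sigma> permutes UNIV \<longleftrightarrow> bij \<sigma>"
  by (simp add: permutes_univ bij_iff)

definition rep_orbits :: "int \<Rightarrow> config set set" where
  "rep_orbits g = (\<lambda>(c, \<sigma>, e). superA_orbit (rep_config g c \<sigma> e)) ` (UNIV \<times> {\<sigma>. bij \<sigma>} \<times> UNIV)"

lemma card_rep_orbits:
  assumes g: "g \<ge> 1"
  shows "finite (rep_orbits g) \<and> card (rep_orbits g) = 384"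
proof -
  let ?I = "(UNIV :: (bool \<times> bool \<times> bool) set) \<times> {\<sigma>::4 \<Rightarrow> 4. bij \<sigma>} \<times> (UNIV :: bool set)"
  have "inj_on (\<lambda>(c, \<sigma>, e). superA_orbit (rep_config g c \<sigma> e)) ?I"
  proof (rule inj_onI)
    fix x y assume "x \<in> ?I" "y \<in> ?I"
      and eq: "(\<lambda>(c, \<sigma>, e). superA_orbit (rep_config g c \<sigma> e)) x
        = (\<lambda>(c, \<sigma>, e). superA_orbit (rep_config g c \<sigma> e)) y"
    moreover obtain c \<sigma> e c' \<sigma>' e' where "x = (c, \<sigma>, e)" "y = (c', \<sigma>', e')"
      by (cases x, cases y) auto
    ultimately show "x = y" using superA_orbit_rep_config_inj[OF g, of \<sigma> \<sigma>' c e c' e'] by simp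
  qed
  moreover have "card {\<sigma>::4 \<Rightarrow> 4. bij \<sigma>} = 24" "finite {\<sigma>::4 \<Rightarrow> 4. bij \<sigma>}"
    using card_permutations[of "UNIV :: 4 set"] finite_permutations[of "UNIV :: 4 set"]
    by (simp_all add: permutes_UNIV_iff_bij fact_numeral)
  then have "card ?I = 384" "finite ?I"
    by (simp_all add: card_cartesian_product card_UNIV_bool)
  ultimately show ?thesis unfolding rep_orbits_def by (simp add: card_image)
qed

lemma rep_orbits_cover:
  assumes g: "g \<ge> 1"
  shows "\<Union> (rep_orbits g) = {D. oo_descartes D \<and> strongly_integral D \<and> divisor D = g}"
proof (intro equalityI subsetI)
  fix D assume "D \<in> \<Union> (rep_orbits g)"
  then obtain c \<sigma> e where "bij \<sigma>" "D \<in> superA_orbit (rep_config g c \<sigma> e)"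
    unfolding rep_orbits_def by auto
  then show "D \<in> {D. oo_descartes D \<and> strongly_integral D \<and> divisor D = g}"
    using superA_orbit_rep_config[OF g] by blast
next
  fix D assume "D \<in> {D. oo_descartes D \<and> strongly_integral D \<and> divisor D = g}"
  then obtain c \<sigma> e where "bij \<sigma>" "D \<in> superA_orbit (rep_config g c \<sigma> e)"
    using superA_orbit_rep_config_exists[OF g] by blast
  then show "D \<in> \<Union> (rep_orbits g)" unfolding rep_orbits_def by blast
qed

lemma rep_orbits_orbits:
  assumes "g \<ge> 1" "X \<in> rep_orbits g"
  shows "\<exists>D. oo_descartes D \<and> X = superA_orbit D"
proof -
  obtain c \<sigma> e where "bij \<sigma>" "X = superA_orbit (rep_config g c \<sigma> e)"
    using assms(2) unfolding rep_orbits_def by auto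
  then show ?thesis using oo_descartes_rep_config[OF assms(1)] by blast
qed

lemma integral_super_packings:
  assumes g: "g \<ge> 1"
  shows "{P. \<exists>D. oo_descartes D \<and> strongly_integral D \<and> divisor D = g \<and> P = super_packing D}
    = range (\<lambda>c. super_packing (base_config g c))"
proof (intro equalityI subsetI)
  fix P assume "P \<in> {P. \<exists>D. oo_descartes D \<and> strongly_integral D \<and> divisor D = g \<and> P = super_packing D}"
  then obtain D where D: "oo_descartes D" "strongly_integral D" "divisor D = g" "P = super_packing D"
    by blast
  then obtain c \<sigma> e where "bij \<sigma>" "D \<in> superA_orbit (rep_config g c \<sigma> e)"
    using superA_orbit_rep_config_exists[OF g] by blast
  then show "P \<in> range (\<lambda>c. super_packing (base_config g c))"
    using D(4) super_packing_orbit super_packing_rep_config by auto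
next
  fix P assume "P \<in> range (\<lambda>c. super_packing (base_config g c))"
  then obtain c where "P = super_packing (base_config g c)" by blast
  moreover have "rep_config g c id True \<in> superA_orbit (rep_config g c id True)"
    using superA_orbit_self oo_descartes_rep_config[OF g bij_id] by blast
  ultimately show "P \<in> {P. \<exists>D. oo_descartes D \<and> strongly_integral D \<and> divisor D = g \<and> P = super_packing D}"
    using superA_orbit_rep_config[OF g bij_id] super_packing_rep_config[OF bij_id] by blast
qed

lemma card_integral_super_packings:
  assumes g: "g \<ge> 1"
  shows "card (range (\<lambda>c. super_packing (base_config g c))) = 8"
proof -
  have "inj (\<lambda>c. super_packing (base_config g c))"
    by (rule injI) (use super_packing_base_config_inj[OF g] in blast)
  then show ?thesis by (simp add: card_image card_UNIV_bool)
qed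

theorem theorem5p1:
  fixes g :: int
  assumes "g \<ge> 1"
  shows "card {P. \<exists>D. oo_descartes D \<and> strongly_integral D \<and> divisor D = g
                   \<and> P = super_packing D} = 8
       \<and> (\<exists>Orbs. finite Orbs \<and> card Orbs = 384
              \<and> (\<forall>X\<in>Orbs. \<exists>D. oo_descartes D \<and> X = superA_orbit D)
              \<and> \<Union>Orbs = {D. oo_descartes D \<and> strongly_integral D \<and> divisor D = g})"
proof
  show "card {P. \<exists>D. oo_descartes D \<and> strongly_integral D \<and> divisor D = g \<and> P = super_packing D} = 8"
    unfolding integral_super_packings[OF assms] by (rule card_integral_super_packings[OF assms])
  show "\<exists>Orbs. finite Orbs \<and> card Orbs = 384
      \<and> (\<forall>X\<in>Orbs. \<exists>D. oo_descartes D \<and> X = superA_orbit D)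
      \<and> \<Union>Orbs = {D. oo_descartes D \<and> strongly_integral D \<and> divisor D = g}"
  proof (intro exI[of _ "rep_orbits g"] conjI ballI)
    show "finite (rep_orbits g)" "card (rep_orbits g) = 384" using card_rep_orbits[OF assms] by simp_all
    show "\<exists>D. oo_descartes D \<and> X = superA_orbit D" if "X \<in> rep_orbits g" for X
      using rep_orbits_orbits[OF assms that] .
    show "\<Union> (rep_orbits g) = {D. oo_descartes D \<and> strongly_integral D \<and> divisor D = g}"
      by (rule rep_orbits_cover[OF assms])
  qed
qed

end
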